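(* Suppose each bidder $j$ additionally reports $d_j$, the smallest $d\in[n]$ such that $v_j$ is $d$-self-bounding, and let $d=\max_jd_j$. Define $\hat d_{-i}=\max_{j\ne i}d_j$, $\eta_i=4(\hat d_{-i}+1)$ and $x_i=\mathbb E_{r,\pi}[c_i]/\eta_i$. Then: (i) for every $i$, $x_i$ depends on bidder $i$'s report only through $v_i(\mathbf s)$ and is non-decreasing in it, so with payments $p_i=x_i(\mathbf s_{-i},\mathbf v_{-i},v_i(\mathbf s))v_i(\mathbf s)-\int_0^{v_i(\mathbf s)}x_i(\mathbf s_{-i},\mathbf v_{-i},t)dt$ the mechanism is EPIC-IR; (ii) $\sum_ix_i\le1$; (iii) for truthful reports, $\sum_ix_iv_i(\mathbf s)\ge\frac{\max_iv_i(\mathbf s)}{8(d+1)\ln2}$.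
   Context: Single-item auction, $n\ge2$ bidders, signals $s_i\in S_i\subseteq\mathbb R$, valuations $v_i:\mathbf S\to\mathbb R_{>0}$, $\mathbf S=S_1\times\cdots\times S_n$. Lower estimates $\underline v_j^{(i)}(\mathbf s)=\inf_{o_i\in S_i}v_j(o_i,\mathbf s_{-i})$. $v$ is $d$-self-bounding if $\sum_i(v(\mathbf s)-\inf_{o_i}v(o_i,\mathbf s_{-i}))\le d\,v(\mathbf s)$ for all $\mathbf s$ (every valuation is $n$-self-bounding). For $r\in[0,1)$, $w>0$: $f_r(w)=2^{r+k}$ for the integer $k$ with $2^{r+k}\le w<2^{r+k+1}$; $f_r(0)=0$. For a permutation $\pi$ of $[n]$, $a$ associated with bidder $i$ and $b$ with bidder $j$: $a>_\pi b$ iff $a>b$, or $a=b$ and $\pi(i)>\pi(j)$. $c_i(r,\pi)=1$ iff $f_r(v_i(\mathbf s))>_\pi f_r(\underline v_j^{(i)}(\mathbf s))$ for all $j\ne i$; $r\sim U[0,1)$ and $\pi$ uniform, independent. EPIC-IR: truthful reporting maximizes each bidder's utility $x_iv_i(\mathbf s)-p_i$ against any misreport $(s_i',v_i',d_i')$ given truthful others, and this utility is nonnegative. *)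

theory Defs
  imports "HOL-Analysis.Analysis" "HOL-Combinatorics.Permutations"
begin

text \<open>Bidders are indexed by 0..n-1. A signal profile is an element of
  PiE {..<n} S; a valuation profile is v :: nat => (nat => real) => real.\<close>

definition sprof :: "nat \<Rightarrow> (nat \<Rightarrow> real set) \<Rightarrow> (nat \<Rightarrow> real) set" where
  "sprof n S = PiE {..<n} S"

definition lowest :: "(nat \<Rightarrow> real set) \<Rightarrow> (nat \<Rightarrow> (nat \<Rightarrow> real) \<Rightarrow> real)
    \<Rightarrow> nat \<Rightarrow> nat \<Rightarrow> (nat \<Rightarrow> real) \<Rightarrow> real" where
  "lowest S v i j s = (INF x\<in>S i. v j (s(i := x)))"

definition self_bounding :: "nat \<Rightarrow> (nat \<Rightarrow> real set) \<Rightarrow> ((nat \<Rightarrow> real) \<Rightarrow> real) \<Rightarrow> nat \<Rightarrow> bool" where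
  "self_bounding n S w d \<longleftrightarrow>
     (\<forall>s\<in>sprof n S. (\<Sum>i<n. w s - (INF x\<in>S i. w (s(i := x)))) \<le> real d * w s)"

definition sb_degree :: "nat \<Rightarrow> (nat \<Rightarrow> real set) \<Rightarrow> ((nat \<Rightarrow> real) \<Rightarrow> real) \<Rightarrow> nat" where
  "sb_degree n S w = (LEAST d. d \<in> {1..n} \<and> self_bounding n S w d)"

definition fr :: "real \<Rightarrow> real \<Rightarrow> real" where
  "fr r w = (if w = 0 then 0 else
     2 powr (r + real_of_int (THE k::int. 2 powr (r + k) \<le> w \<and> w < 2 powr (r + k + 1))))"

definition gt_pi :: "(nat \<Rightarrow> nat) \<Rightarrow> real \<Rightarrow> nat \<Rightarrow> real \<Rightarrow> nat \<Rightarrow> bool" where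
  "gt_pi \<pi> a i b j \<longleftrightarrow> a > b \<or> (a = b \<and> \<pi> i > \<pi> j)"

text \<open>c_i(r,pi), with bidder i's value v_i(s) replaced by a bid t.\<close>
definition cbid :: "nat \<Rightarrow> (nat \<Rightarrow> real set) \<Rightarrow> (nat \<Rightarrow> (nat \<Rightarrow> real) \<Rightarrow> real)
    \<Rightarrow> (nat \<Rightarrow> real) \<Rightarrow> nat \<Rightarrow> real \<Rightarrow> real \<Rightarrow> (nat \<Rightarrow> nat) \<Rightarrow> bool" where
  "cbid n S v s i t r \<pi> \<longleftrightarrow>
     (\<forall>j<n. j \<noteq> i \<longrightarrow> gt_pi \<pi> (fr r t) i (fr r (lowest S v i j s)) j)"

text \<open>E_{r,pi}[c_i] with r ~ U[0,1) and pi uniform over permutations of {..<n}, independent.\<close>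
definition Ec :: "nat \<Rightarrow> (nat \<Rightarrow> real set) \<Rightarrow> (nat \<Rightarrow> (nat \<Rightarrow> real) \<Rightarrow> real)
    \<Rightarrow> (nat \<Rightarrow> real) \<Rightarrow> nat \<Rightarrow> real \<Rightarrow> real" where
  "Ec n S v s i t =
     (\<Sum>\<pi>\<in>{\<pi>. \<pi> permutes {..<n}}. measure lborel {r \<in> {0..<1}. cbid n S v s i t r \<pi>}) / fact n"

definition eta :: "nat \<Rightarrow> (nat \<Rightarrow> nat) \<Rightarrow> nat \<Rightarrow> real" where
  "eta n d i = 4 * (real (Max {d j | j. j < n \<and> j \<noteq> i}) + 1)"

definition xbid :: "nat \<Rightarrow> (nat \<Rightarrow> real set) \<Rightarrow> (nat \<Rightarrow> (nat \<Rightarrow> real) \<Rightarrow> real)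
    \<Rightarrow> (nat \<Rightarrow> nat) \<Rightarrow> (nat \<Rightarrow> real) \<Rightarrow> nat \<Rightarrow> real \<Rightarrow> real" where
  "xbid n S v d s i t = Ec n S v s i t / eta n d i"

definition alloc :: "nat \<Rightarrow> (nat \<Rightarrow> real set) \<Rightarrow> (nat \<Rightarrow> (nat \<Rightarrow> real) \<Rightarrow> real)
    \<Rightarrow> (nat \<Rightarrow> nat) \<Rightarrow> (nat \<Rightarrow> real) \<Rightarrow> nat \<Rightarrow> real" where
  "alloc n S v d s i = xbid n S v d s i (v i s)"

definition pay :: "nat \<Rightarrow> (nat \<Rightarrow> real set) \<Rightarrow> (nat \<Rightarrow> (nat \<Rightarrow> real) \<Rightarrow> real)
    \<Rightarrow> (nat \<Rightarrow> nat) \<Rightarrow> (nat \<Rightarrow> real) \<Rightarrow> nat \<Rightarrow> real" where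
  "pay n S v d s i = xbid n S v d s i (v i s) * v i s - integral {0..v i s} (xbid n S v d s i)"

definition valid_vals :: "nat \<Rightarrow> (nat \<Rightarrow> real set) \<Rightarrow> (nat \<Rightarrow> (nat \<Rightarrow> real) \<Rightarrow> real) \<Rightarrow> bool" where
  "valid_vals n S v \<longleftrightarrow> (\<forall>j<n. \<forall>s\<in>sprof n S. 0 < v j s)"

end

theory Submission
  imports Defs
begin

text \<open>
  The rounding \<open>f\<^sub>r\<close> is monotone, so each event \<open>c\<^sub>i(r,\<pi>)\<close> is monotone in bidder \<open>i\<close>'s bid
  and otherwise independent of \<open>i\<close>'s report; Myerson's payment rule then gives EPIC-IR.

  Feasibility is a charging argument. For fixed \<open>r\<close> and \<open>\<pi>\<close>, every winner \<open>i\<close> except at most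
  one can be charged to a bidder \<open>j \<noteq> i\<close> whose rounded value exceeds its rounded lower
  estimate with respect to \<open>i\<close>. Over \<open>r\<close> that happens with probability at most
  \<open>2(v\<^sub>j - v\<^sub>j\<^sup>(\<^sup>i\<^sup>))/v\<^sub>j\<close>, which sums over \<open>i\<close> to at most \<open>2d\<^sub>j\<close> by self-boundedness and is
  paid for by \<open>\<eta>\<^sub>i \<ge> 4(d\<^sub>j + 1)\<close>. A charge goes either to the highest bidder or to a bidder
  \<open>j\<close> of value rank \<open>m\<close> such that \<open>\<pi>\<close> puts \<open>j\<close> above \<open>i\<close> and \<open>i\<close> above every bidder
  ranked above \<open>j\<close>; the latter has probability \<open>O(1/m\<^sup>2)\<close>, and these bounds sum to less than one.

  For the approximation, in every outcome some bidder of maximal rounded value wins, and the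
  rounded maximum has expectation \<open>E\<^sub>r[f\<^sub>r(V)] = V/(2 ln 2)\<close>.
\<close>

section \<open>Random rounding to powers of two\<close>

lemma fr_eq_floor_log:
  assumes "w > 0"
  shows "fr r w = 2 powr (r + \<lfloor>log 2 w - r\<rfloor>)"
proof -
  have "(THE k::int. 2 powr (r + k) \<le> w \<and> w < 2 powr (r + k + 1)) = \<lfloor>log 2 w - r\<rfloor>"
  proof (rule the_equality)
    show "2 powr (r + \<lfloor>log 2 w - r\<rfloor>) \<le> w \<and> w < 2 powr (r + \<lfloor>log 2 w - r\<rfloor> + 1)"
      using assms by (simp add: le_log_iff[symmetric] log_less_iff[symmetric]) linarith
  next
    fix k :: int assume "2 powr (r + k) \<le> w \<and> w < 2 powr (r + k + 1)"
    then have "r + k \<le> log 2 w" "log 2 w < r + k + 1"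
      using assms by (simp_all add: le_log_iff log_less_iff)
    then show "k = \<lfloor>log 2 w - r\<rfloor>" by linarith
  qed
  then show ?thesis using assms by (simp add: fr_def)
qed

lemma fr_zero [simp]: "fr r 0 = 0"
  by (simp add: fr_def)

lemma fr_nonneg: "w \<ge> 0 \<Longrightarrow> fr r w \<ge> 0"
  by (cases "w = 0") (auto simp: fr_eq_floor_log)

lemma fr_le_self:
  assumes "w \<ge> 0"
  shows "fr r w \<le> w"
proof (cases "w = 0")
  case False
  then have "w > 0" using assms by simp
  have "r + real_of_int \<lfloor>log 2 w - r\<rfloor> \<le> log 2 w" by linarith
  then show ?thesis using \<open>w > 0\<close> by (simp add: fr_eq_floor_log le_log_iff)
qed simp

lemma fr_mono:
  assumes "0 \<le> a" "a \<le> b"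
  shows "fr r a \<le> fr r b"
proof (cases "a = 0")
  case True
  then show ?thesis using assms fr_nonneg by simp
next
  case False
  then have "a > 0" "b > 0" using assms by auto
  then have "\<lfloor>log 2 a - r\<rfloor> \<le> \<lfloor>log 2 b - r\<rfloor>" using assms by (intro floor_mono) simp
  then show ?thesis using \<open>a > 0\<close> \<open>b > 0\<close> by (simp add: fr_eq_floor_log)
qed

lemma fr_less_fr_iff:
  assumes "a > 0" "b > 0"
  shows "fr r a < fr r b \<longleftrightarrow> \<lfloor>log 2 a - r\<rfloor> < \<lfloor>log 2 b - r\<rfloor>"
  using assms by (simp add: fr_eq_floor_log)

lemma borel_measurable_fr [measurable]:
  assumes "w \<ge> 0"
  shows "(\<lambda>r. fr r w) \<in> borel_measurable borel"
proof -
  have "fr r w = (if w = 0 then 0 else 2 powr (r + \<lfloor>log 2 w - r\<rfloor>))" for r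
    using assms by (auto simp: fr_eq_floor_log)
  then show ?thesis by simp
qed

lemma floor_diff_unit:
  fixes x r :: real
  assumes "0 \<le> r" "r < 1"
  shows "\<lfloor>x - r\<rfloor> = \<lfloor>x\<rfloor> - of_bool (frac x < r)"
  using assms unfolding frac_def by (simp add: floor_eq_iff) linarith

lemma fmeasurable_subset_unit:
  "A \<subseteq> {0..<1::real} \<Longrightarrow> A \<in> sets lborel \<Longrightarrow> A \<in> fmeasurable lborel"
  by (rule fmeasurableI2[OF fmeasurable_cbox[of 0 1]]) (auto simp: cbox_interval)

lemma measure_subset_unit_le_1:
  assumes "A \<subseteq> {0..<1::real}" "A \<in> sets lborel"
  shows "measure lborel A \<le> 1"
proof -
  have "measure lborel A \<le> measure lborel {0..1::real}"
    using assms fmeasurable_cbox[of "0::real" 1] by (intro measure_mono_fmeasurable) auto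
  then show ?thesis by simp
qed

lemma integrable_indicator_subset_unit:
  assumes "A \<subseteq> {0..<1::real}" "A \<in> sets lborel"
  shows "integrable lborel (indicator A :: real \<Rightarrow> real)"
  using fmeasurable_subset_unit[OF assms] by (simp add: fmeasurable_def integrable_indicator_iff)

lemma integral_sum_indicator:
  assumes "finite I" "\<And>i. i \<in> I \<Longrightarrow> A i \<subseteq> {0..<1::real}" "\<And>i. i \<in> I \<Longrightarrow> A i \<in> sets lborel"
  shows "integrable lborel (\<lambda>r. \<Sum>i\<in>I. indicator (A i) r * c i)"
    and "(\<integral>r. (\<Sum>i\<in>I. indicator (A i) r * c i) \<partial>lborel) = (\<Sum>i\<in>I. measure lborel (A i) * (c i :: real))"
proof -
  have int: "integrable lborel (\<lambda>r. indicator (A i) r * c i)" if "i \<in> I" for i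
    using integrable_indicator_subset_unit[OF assms(2,3)[OF that]] by (rule integrable_mult_left)
  then show "integrable lborel (\<lambda>r. \<Sum>i\<in>I. indicator (A i) r * c i)"
    by (rule Bochner_Integration.integrable_sum)
  have "(\<integral>r. (\<Sum>i\<in>I. indicator (A i) r * c i) \<partial>lborel) = (\<Sum>i\<in>I. \<integral>r. indicator (A i) r * c i \<partial>lborel)"
    by (rule Bochner_Integration.integral_sum) (use int in auto)
  then show "(\<integral>r. (\<Sum>i\<in>I. indicator (A i) r * c i) \<partial>lborel) = (\<Sum>i\<in>I. measure lborel (A i) * c i)"
    by (simp add: integral_mult_left_zero)
qed

lemma measure_floor_shift_less_le:
  fixes \<alpha> \<beta> :: real
  assumes "\<alpha> \<le> \<beta>" "\<beta> - \<alpha> < 1"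
  shows "measure lborel {r \<in> {0..<1}. \<lfloor>\<alpha> - r\<rfloor> < \<lfloor>\<beta> - r\<rfloor>} \<le> \<beta> - \<alpha>"
proof -
  define \<theta> where "\<theta> = frac \<beta>"
  have \<theta>: "0 \<le> \<theta>" "\<theta> < 1" unfolding \<theta>_def by (simp_all add: frac_lt_1)
  define I1 where "I1 = {max 0 (\<theta> - (\<beta> - \<alpha>))..\<theta>}"
  define I2 where "I2 = {\<theta> - (\<beta> - \<alpha>) + 1..max (\<theta> - (\<beta> - \<alpha>) + 1) 1}"
  have sub: "{r \<in> {0..<1}. \<lfloor>\<alpha> - r\<rfloor> < \<lfloor>\<beta> - r\<rfloor>} \<subseteq> I1 \<union> I2"
  proof
    fix r assume "r \<in> {r \<in> {0..<1}. \<lfloor>\<alpha> - r\<rfloor> < \<lfloor>\<beta> - r\<rfloor>}"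
    then have r: "0 \<le> r" "r < 1" and "\<lfloor>\<alpha> - r\<rfloor> < \<lfloor>\<beta>\<rfloor> - of_bool (\<theta> < r)"
      using floor_diff_unit[of r \<beta>] unfolding \<theta>_def by auto
    then have "\<alpha> - r < \<lfloor>\<beta>\<rfloor> - of_bool (\<theta> < r)" by linarith
    then show "r \<in> I1 \<union> I2"
      using r unfolding I1_def I2_def \<theta>_def frac_def by (cases "frac \<beta> < r") (auto simp: frac_def)
  qed
  have "{r \<in> {0..<1}. \<lfloor>\<alpha> - r\<rfloor> < \<lfloor>\<beta> - r\<rfloor>} \<in> sets lborel"
  proof -
    have "Measurable.pred borel (\<lambda>r::real. \<lfloor>\<alpha> - r\<rfloor> < \<lfloor>\<beta> - r\<rfloor>)" by measurable
    then show ?thesis by (simp add: pred_def Collect_conj_eq sets_lborel)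
  qed
  then have "measure lborel {r \<in> {0..<1}. \<lfloor>\<alpha> - r\<rfloor> < \<lfloor>\<beta> - r\<rfloor>} \<le> measure lborel (I1 \<union> I2)"
    using sub fmeasurable_cbox[of "_::real", unfolded cbox_interval] unfolding I1_def I2_def
    by (intro measure_mono_fmeasurable fmeasurable.Un) auto
  also have "\<dots> \<le> measure lborel I1 + measure lborel I2"
    by (rule measure_Un_le) (simp_all add: I1_def I2_def)
  also have "\<dots> = \<beta> - \<alpha>"
    using \<theta> assms unfolding I1_def I2_def by (simp add: max_def)
  finally show ?thesis .
qed

lemma minus_ln_le_chord:
  fixes y :: real
  assumes "1/2 \<le> y" "y \<le> 1"
  shows "- ln y \<le> 2 * ln 2 * (1 - y)"
proof -
  have "concave_on {1/2..1::real} ln"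
    using ln_concave unfolding concave_on_def by (rule convex_on_subset) auto
  then have "(ln 1 - ln (1/2)) / (1 - 1/2) * (y - 1/2) + ln (1/2) \<le> ln y"
    using assms by (intro concave_onD_Icc') auto
  then show ?thesis by (simp add: ln_div algebra_simps)
qed

lemma sets_fr_less_fr:
  assumes "0 \<le> a" "0 \<le> b"
  shows "{r \<in> {0..<1}. fr r a < fr r b} \<in> sets lborel"
proof -
  have "Measurable.pred borel (\<lambda>r. fr r a < fr r b)" using assms by measurable
  then show ?thesis by (simp add: pred_def Collect_conj_eq sets_lborel)
qed

lemma measure_fr_less_fr_le:
  assumes "0 \<le> a" "a \<le> b" "0 < b"
  shows "measure lborel {r \<in> {0..<1}. fr r a < fr r b} \<le> 2 * (b - a) / b"
proof (cases "2 * a \<le> b")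
  case True
  have "measure lborel {r \<in> {0..<1}. fr r a < fr r b} \<le> 1"
    using assms by (intro measure_subset_unit_le_1) auto
  also have "1 \<le> 2 * (b - a) / b" using True assms by (simp add: field_simps)
  finally show ?thesis .
next
  case False
  then have "a > 0" using assms by auto
  have "log 2 b - log 2 a = log 2 (b / a)" using \<open>a > 0\<close> assms by (simp add: log_divide)
  also have "\<dots> < 1" using False \<open>a > 0\<close> assms by (simp add: log_less_iff field_simps)
  finally have "log 2 b - log 2 a < 1" .
  moreover have "log 2 a \<le> log 2 b" using \<open>a > 0\<close> assms by simp
  ultimately have "measure lborel {r \<in> {0..<1}. fr r a < fr r b} \<le> log 2 b - log 2 a"
    using measure_floor_shift_less_le \<open>a > 0\<close> assms by (simp add: fr_less_fr_iff)
  also have "\<dots> = - ln (a / b) / ln 2"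
    using \<open>a > 0\<close> assms by (simp add: log_def ln_div diff_divide_distrib)
  also have "\<dots> \<le> 2 * ln 2 * (1 - a / b) / ln 2"
    using minus_ln_le_chord[of "a / b"] False \<open>a > 0\<close> assms
    by (intro divide_right_mono) (auto simp: field_simps)
  also have "\<dots> = 2 * (b - a) / b" using assms by (simp add: field_simps)
  finally show ?thesis .
qed


lemma nn_integral_two_powr:
  assumes "a \<le> b"
  shows "(\<integral>\<^sup>+x\<in>{a..b}. ennreal (2 powr (x + c)) \<partial>lborel) = ennreal ((2 powr (b + c) - 2 powr (a + c)) / ln 2)"
proof -
  have "(\<integral>\<^sup>+x\<in>{a..b}. ennreal (2 powr (x + c)) \<partial>lborel) = ennreal (2 powr (b + c) / ln 2 - 2 powr (a + c) / ln 2)"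
    by (rule nn_integral_FTC_Icc) (auto intro!: derivative_eq_intros simp: assms)
  then show ?thesis by (simp add: diff_divide_distrib)
qed

lemma nn_integral_fr_ge:
  assumes "V > 0"
  shows "ennreal (V / (2 * ln 2)) \<le> (\<integral>\<^sup>+ r. ennreal (indicator {0..<1} r * fr r V) \<partial>lborel)"
proof -
  define m where "m = real_of_int \<lfloor>log 2 V\<rfloor>"
  define \<theta> where "\<theta> = frac (log 2 V)"
  have \<theta>: "0 \<le> \<theta>" "\<theta> < 1" unfolding \<theta>_def by (simp_all add: frac_lt_1)
  \<comment> \<open>\<open>f\<^sub>r(V)\<close> is \<open>2\<^sup>r\<^sup>+\<^sup>m\<close> for \<open>r \<le> \<theta>\<close> and \<open>2\<^sup>r\<^sup>+\<^sup>m\<^sup>-\<^sup>1\<close> for \<open>\<theta> < r < 1\<close>\<close>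
  define X where "X = (2 powr (\<theta> + m) - 2 powr (0 + m)) / ln 2"
  define Y where "Y = (2 powr (1 + (m - 1)) - 2 powr (\<theta> + (m - 1))) / ln 2"
  have V: "2 powr (\<theta> + m) = V"
    unfolding \<theta>_def m_def frac_def using assms by simp
  then have "2 powr (\<theta> + (m - 1)) = V / 2"
    using powr_diff[of 2 "\<theta> + m" 1] by (simp add: algebra_simps)
  then have "V / (2 * ln 2) = X + Y" unfolding X_def Y_def using V by (simp add: field_simps)
  moreover have "0 \<le> X" "0 \<le> Y" unfolding X_def Y_def using \<theta> by simp_all
  ultimately have "ennreal (V / (2 * ln 2)) = ennreal X + ennreal Y" by (simp add: ennreal_plus)
  also have "\<dots> = (\<integral>\<^sup>+x\<in>{0..\<theta>}. ennreal (2 powr (x + m)) \<partial>lborel)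
                  + (\<integral>\<^sup>+x\<in>{\<theta>..1}. ennreal (2 powr (x + (m - 1))) \<partial>lborel)"
    unfolding X_def Y_def using \<theta> by (simp add: nn_integral_two_powr)
  also have "\<dots> = (\<integral>\<^sup>+x. ennreal (2 powr (x + m)) * indicator {0..\<theta>} x
                      + ennreal (2 powr (x + (m - 1))) * indicator {\<theta>..1} x \<partial>lborel)"
    by (rule nn_integral_add[symmetric]) auto
  also have "\<dots> \<le> (\<integral>\<^sup>+ r. ennreal (indicator {0..<1} r * fr r V) \<partial>lborel)"
  proof (rule nn_integral_mono_AE)
    have "AE x in lborel. x \<noteq> \<theta> \<and> x \<noteq> 1"
      using AE_lborel_singleton[of \<theta>] AE_lborel_singleton[of 1] by eventually_elim auto
    then show "AE x in lborel. ennreal (2 powr (x + m)) * indicator {0..\<theta>} x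
        + ennreal (2 powr (x + (m - 1))) * indicator {\<theta>..1} x \<le> ennreal (indicator {0..<1} x * fr x V)"
    proof eventually_elim
      case (elim x)
      show ?case
      proof (cases "0 \<le> x \<and> x < 1")
        case True
        then have "fr x V = 2 powr (x + (m - of_bool (\<theta> < x)))"
          using assms floor_diff_unit[of x "log 2 V"] unfolding m_def \<theta>_def by (simp add: fr_eq_floor_log)
        then show ?thesis using True elim by (auto simp: indicator_def)
      next
        case False
        then show ?thesis using elim \<theta> by (auto simp: indicator_def)
      qed
    qed
  qed
  finally show ?thesis .
qed


section \<open>The top two elements under a random permutation\<close>

abbreviation "Perms n \<equiv> {\<pi>. \<pi> permutes {..<n}}"

definition top_two :: "nat set \<Rightarrow> nat \<Rightarrow> nat \<Rightarrow> (nat \<Rightarrow> nat) \<Rightarrow> bool" where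
  "top_two X a b \<pi> \<longleftrightarrow> (\<forall>x\<in>X - {a}. \<pi> x < \<pi> a) \<and> (\<forall>x\<in>X - {a, b}. \<pi> x < \<pi> b)"

lemma top_two_comp_permutes:
  assumes "\<tau> permutes X"
  shows "top_two X a b (\<pi> \<circ> \<tau>) \<longleftrightarrow> top_two X (\<tau> a) (\<tau> b) \<pi>"
proof -
  have "\<tau> ` (X - T) = X - \<tau> ` T" for T
    using permutes_imp_bij[OF assms] permutes_inj[OF assms] by (metis bij_betw_def image_set_diff)
  then have "(\<forall>x\<in>X - T. P (\<tau> x)) \<longleftrightarrow> (\<forall>y\<in>X - \<tau> ` T. P y)" for T P
    by (metis image_eqI imageE)
  from this[of "{a}" "\<lambda>y. \<pi> y < \<pi> (\<tau> a)"] this[of "{a, b}" "\<lambda>y. \<pi> y < \<pi> (\<tau> b)"]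
  show ?thesis unfolding top_two_def by simp
qed

lemma card_top_two_permutes:
  assumes X: "X \<subseteq> {..<n}" and \<tau>: "\<tau> permutes X"
  shows "card {\<pi> \<in> Perms n. top_two X (\<tau> a) (\<tau> b) \<pi>} = card {\<pi> \<in> Perms n. top_two X a b \<pi>}"
proof -
  have \<tau>n: "\<tau> permutes {..<n}" using \<tau> X by (rule permutes_subset)
  have "bij_betw (\<lambda>\<pi>. \<pi> \<circ> \<tau>) {\<pi> \<in> Perms n. top_two X (\<tau> a) (\<tau> b) \<pi>} {\<pi> \<in> Perms n. top_two X a b \<pi>}"
  proof (rule bij_betwI[where g = "\<lambda>\<pi>. \<pi> \<circ> inv \<tau>"])
    show "(\<lambda>\<pi>. \<pi> \<circ> \<tau>) \<in> {\<pi> \<in> Perms n. top_two X (\<tau> a) (\<tau> b) \<pi>} \<rightarrow> {\<pi> \<in> Perms n. top_two X a b \<pi>}"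
      using top_two_comp_permutes[OF \<tau>] permutes_compose[OF \<tau>n] by auto
    show "(\<lambda>\<pi>. \<pi> \<circ> inv \<tau>) \<in> {\<pi> \<in> Perms n. top_two X a b \<pi>} \<rightarrow> {\<pi> \<in> Perms n. top_two X (\<tau> a) (\<tau> b) \<pi>}"
      using top_two_comp_permutes[OF \<tau>, of a b "_ \<circ> inv \<tau>"] permutes_inv_o(2)[OF \<tau>]
        permutes_compose[OF permutes_inv[OF \<tau>n]] by (auto simp: comp_assoc)
    show "\<pi> \<circ> \<tau> \<circ> inv \<tau> = \<pi>" "\<pi> \<circ> inv \<tau> \<circ> \<tau> = \<pi>" for \<pi>
      using permutes_inv_o[OF \<tau>] by (simp_all add: comp_assoc)
  qed
  then show ?thesis by (rule bij_betw_same_card)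
qed

lemma permutes_map_pair:
  assumes "a \<in> X" "b \<in> X" "a \<noteq> b" "a' \<in> X" "b' \<in> X" "a' \<noteq> b'"
  shows "\<exists>\<tau>. \<tau> permutes X \<and> \<tau> a' = a \<and> \<tau> b' = b"
proof -
  define t1 where "t1 = Transposition.transpose a a'"
  define t2 where "t2 = Transposition.transpose (t1 b') b"
  have "t1 b' \<noteq> a" "t1 b' \<in> X" unfolding t1_def using assms by (auto simp: Transposition.transpose_def)
  then have "t2 \<circ> t1 permutes X" "(t2 \<circ> t1) a' = a" "(t2 \<circ> t1) b' = b"
    unfolding t2_def t1_def using assms
    by (auto intro!: permutes_compose permutes_swap_id simp: Transposition.transpose_def)
  then show ?thesis by blast
qed

lemma top_two_unique:
  assumes "top_two X a b \<pi>" "top_two X a' b' \<pi>"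
    and "a \<in> X" "b \<in> X" "a \<noteq> b" "a' \<in> X" "b' \<in> X" "a' \<noteq> b'"
  shows "a = a' \<and> b = b'"
proof
  show "a = a'"
  proof (rule ccontr)
    assume "a \<noteq> a'"
    then have "\<pi> a' < \<pi> a" "\<pi> a < \<pi> a'" using assms unfolding top_two_def by auto
    then show False by simp
  qed
  show "b = b'"
  proof (rule ccontr)
    assume "b \<noteq> b'"
    then have "\<pi> b' < \<pi> b" "\<pi> b < \<pi> b'" using assms \<open>a = a'\<close> unfolding top_two_def by auto
    then show False by simp
  qed
qed

(* Every ordered pair of distinct elements of X is the top two for equally many permutations. *)
lemma card_top_two_le:
  assumes X: "X \<subseteq> {..<n}" and ab: "a \<in> X" "b \<in> X" "a \<noteq> b"
  shows "real (card {\<pi> \<in> Perms n. top_two X a b \<pi>}) * (real (card X) * (real (card X) - 1)) \<le> fact n"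
proof -
  define P where "P = {p \<in> X \<times> X. fst p \<noteq> snd p}"
  define N where "N = card {\<pi> \<in> Perms n. top_two X a b \<pi>}"
  have finX: "finite X" using X finite_subset by blast
  have finP: "finite P" unfolding P_def using finX by auto
  have cardP: "card P = card X * (card X - 1)"
  proof -
    have "P = X \<times> X - (\<lambda>x. (x, x)) ` X" unfolding P_def by auto
    moreover have "card ((\<lambda>x. (x, x)) ` X) = card X" by (rule card_image) (auto simp: inj_on_def)
    ultimately show ?thesis
      using finX by (simp add: card_Diff_subset image_subset_iff card_cartesian_product diff_mult_distrib2)
  qed
  have "card {\<pi> \<in> Perms n. top_two X (fst p) (snd p) \<pi>} = N" if p: "p \<in> P" for p
  proof -
    obtain \<tau> where "\<tau> permutes X" "\<tau> (fst p) = a" "\<tau> (snd p) = b"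
      using permutes_map_pair[of a X b "fst p" "snd p"] ab p unfolding P_def by auto
    then show ?thesis unfolding N_def using card_top_two_permutes[OF X, of \<tau> "fst p" "snd p"] by simp
  qed
  then have "real (card P) * N = (\<Sum>p\<in>P. real (card {\<pi> \<in> Perms n. top_two X (fst p) (snd p) \<pi>}))"
    by simp
  also have "\<dots> = (\<Sum>\<pi>\<in>Perms n. \<Sum>p\<in>P. of_bool (top_two X (fst p) (snd p) \<pi>))"
    using finite_permutations[of "{..<n}"]
    by (simp add: sum.swap[of _ P] sum_of_bool_eq Collect_conj_eq Int_commute)
  also have "\<dots> \<le> (\<Sum>\<pi>\<in>Perms n. 1)"
  proof (rule sum_mono)
    fix \<pi>
    have "\<forall>p\<in>P \<inter> {p. top_two X (fst p) (snd p) \<pi>}. \<forall>q\<in>P \<inter> {p. top_two X (fst p) (snd p) \<pi>}. p = q"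
      using top_two_unique unfolding P_def by (auto simp: prod_eq_iff)
    then have "card (P \<inter> {p. top_two X (fst p) (snd p) \<pi>}) \<le> 1"
      using finP card_le_Suc0_iff_eq[of "P \<inter> _"] by simp
    then show "(\<Sum>p\<in>P. of_bool (top_two X (fst p) (snd p) \<pi>)) \<le> (1::real)"
      using finP by (simp add: sum_of_bool_eq)
  qed
  also have "\<dots> = fact n" using card_permutations[of "{..<n}" n] by simp
  finally have "real (card X * (card X - 1)) * N \<le> fact n" using cardP by simp
  moreover have "card X \<ge> 1" using finX ab by (metis One_nat_def Suc_leI card_gt_0_iff empty_iff)
  ultimately show ?thesis unfolding N_def by (simp add: of_nat_diff mult.commute)
qed


section \<open>Charging the winners\<close>

definition ranks_above :: "(nat \<Rightarrow> real) \<Rightarrow> nat \<Rightarrow> nat \<Rightarrow> bool" where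
  "ranks_above vv k j \<longleftrightarrow> vv j < vv k \<or> (vv k = vv j \<and> k < j)"

lemma ranks_above_trans: "ranks_above vv a b \<Longrightarrow> ranks_above vv b c \<Longrightarrow> ranks_above vv a c"
  unfolding ranks_above_def by auto

lemma ranks_above_asym: "ranks_above vv a b \<Longrightarrow> \<not> ranks_above vv b a"
  unfolding ranks_above_def by auto

lemma ranks_above_irrefl: "\<not> ranks_above vv a a"
  unfolding ranks_above_def by auto

lemma ranks_above_total: "j \<noteq> k \<Longrightarrow> ranks_above vv j k \<or> ranks_above vv k j"
  unfolding ranks_above_def by auto

lemma ex_top_ranked:
  assumes "finite A" "A \<noteq> {}"
  shows "\<exists>q\<in>A. \<forall>k\<in>A. k \<noteq> q \<longrightarrow> ranks_above vv q k"
proof -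
  define M where "M = Max (vv ` A)"
  define A' where "A' = {k\<in>A. vv k = M}"
  have "M \<in> vv ` A" unfolding M_def using assms by simp
  then have "A' \<noteq> {}" "finite A'" unfolding A'_def using assms by auto
  then have q: "Min A' \<in> A'" by simp
  have "ranks_above vv (Min A') k" if k: "k \<in> A" "k \<noteq> Min A'" for k
  proof (cases "k \<in> A'")
    case True
    then have "Min A' < k" using \<open>finite A'\<close> k(2) by (simp add: order_less_le)
    then show ?thesis using True q unfolding ranks_above_def A'_def by simp
  next
    case False
    have "vv k \<le> M" unfolding M_def using assms k(1) by simp
    then show ?thesis using False k(1) q unfolding ranks_above_def A'_def by simp
  qed
  then show ?thesis using q unfolding A'_def by blast
qed

definition top_bidder :: "nat \<Rightarrow> (nat \<Rightarrow> real) \<Rightarrow> nat" where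
  "top_bidder n vv = (SOME q. q < n \<and> (\<forall>k<n. \<not> ranks_above vv k q))"

definition count_above :: "nat \<Rightarrow> (nat \<Rightarrow> real) \<Rightarrow> nat \<Rightarrow> nat" where
  "count_above n vv j = card {k\<in>{..<n}. ranks_above vv k j}"

lemma top_bidder_spec:
  assumes "0 < n"
  shows "top_bidder n vv < n" "\<And>k. k < n \<Longrightarrow> \<not> ranks_above vv k (top_bidder n vv)"
proof -
  obtain q where "q < n" "\<forall>k<n. k \<noteq> q \<longrightarrow> ranks_above vv q k"
    using ex_top_ranked[of "{..<n}" vv] assms by auto
  then have "q < n \<and> (\<forall>k<n. \<not> ranks_above vv k q)"
    using ranks_above_asym ranks_above_irrefl by metis
  then have "top_bidder n vv < n \<and> (\<forall>k<n. \<not> ranks_above vv k (top_bidder n vv))"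
    unfolding top_bidder_def by (rule someI)
  then show "top_bidder n vv < n" "\<And>k. k < n \<Longrightarrow> \<not> ranks_above vv k (top_bidder n vv)" by auto
qed

lemma top_bidder_max:
  assumes "0 < n" "k < n"
  shows "vv k \<le> vv (top_bidder n vv)"
  using top_bidder_spec(2)[OF assms, of vv] unfolding ranks_above_def by auto

lemma count_above_pos:
  assumes "j < n" "j \<noteq> top_bidder n vv"
  shows "1 \<le> count_above n vv j"
proof -
  have n: "0 < n" using assms by simp
  have "ranks_above vv (top_bidder n vv) j"
    using ranks_above_total[of j "top_bidder n vv" vv] top_bidder_spec(2)[OF n assms(1)] assms(2) by auto
  then have "top_bidder n vv \<in> {k\<in>{..<n}. ranks_above vv k j}" using top_bidder_spec(1)[OF n] by simp
  then show ?thesis unfolding count_above_def by (auto simp: Suc_le_eq card_gt_0_iff)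
qed

lemma count_above_less: "j < n \<Longrightarrow> count_above n vv j < n"
  unfolding count_above_def
  by (rule le_less_trans[OF card_mono[of "{..<n} - {j}"]]) (auto simp: ranks_above_irrefl)

lemma inj_on_count_above: "inj_on (count_above n vv) {..<n}"
proof -
  have less: "count_above n vv j < count_above n vv k" if "ranks_above vv j k" "j < n" for j k
  proof -
    have "{x\<in>{..<n}. ranks_above vv x j} \<subseteq> {x\<in>{..<n}. ranks_above vv x k}"
      using ranks_above_trans that by blast
    moreover have "j \<notin> {x\<in>{..<n}. ranks_above vv x j}" by (simp add: ranks_above_irrefl)
    moreover have "j \<in> {x\<in>{..<n}. ranks_above vv x k}" using that by simp
    ultimately show ?thesis unfolding count_above_def by (auto intro!: psubset_card_mono)
  qed
  show ?thesis
  proof (rule inj_onI)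
    fix j k assume "j \<in> {..<n}" "k \<in> {..<n}" "count_above n vv j = count_above n vv k"
    then show "j = k" using less[of j k] less[of k j] ranks_above_total[of j k vv] by fastforce
  qed
qed

lemma sum_inverse_consecutive_products:
  "0 < N \<Longrightarrow> (\<Sum>m\<in>{1..<N}. 1 / ((real m + 1) * (real m + 2))) = 1/2 - 1 / (real N + 1)"
proof (induction N)
  case (Suc N)
  show ?case
  proof (cases "N = 0")
    case False
    then have IH: "(\<Sum>m\<in>{1..<N}. 1 / ((real m + 1) * (real m + 2))) = 1/2 - 1 / (real N + 1)"
      using Suc.IH by blast
    have "{1..<Suc N} = insert N {1..<N}" using False by auto
    then have "(\<Sum>m\<in>{1..<Suc N}. 1 / ((real m + 1) * (real m + 2)))
        = 1 / ((real N + 1) * (real N + 2)) + (1/2 - 1 / (real N + 1))"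
      unfolding IH[symmetric] by (simp only:) (rule sum.insert, auto)
    also have "\<dots> = 1/2 - 1 / (real (Suc N) + 1)"
    proof -
      have "real N + 1 \<noteq> 0" "real N + 2 \<noteq> 0" by linarith+
      then show ?thesis by (simp add: divide_simps) (simp add: algebra_simps)
    qed
    finally show ?thesis .
  qed simp
qed simp

lemma sum_count_above_le:
  assumes "0 < n"
  shows "(\<Sum>j\<in>{..<n} - {top_bidder n vv}.
            1 / ((real (count_above n vv j) + 1) * (real (count_above n vv j) + 2))) \<le> 1/2"
proof -
  define f where "f m = 1 / ((real m + 1) * (real m + 2))" for m :: nat
  have "inj_on (count_above n vv) ({..<n} - {top_bidder n vv})"
    by (rule inj_on_subset[OF inj_on_count_above]) auto
  then have "(\<Sum>j\<in>{..<n} - {top_bidder n vv}. f (count_above n vv j))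
      = (\<Sum>m\<in>count_above n vv ` ({..<n} - {top_bidder n vv}). f m)"
    by (simp add: sum.reindex)
  also have "\<dots> \<le> (\<Sum>m\<in>{1..<n}. f m)"
  proof (rule sum_mono2)
    show "count_above n vv ` ({..<n} - {top_bidder n vv}) \<subseteq> {1..<n}"
      using count_above_pos count_above_less by fastforce
  qed (simp_all add: f_def)
  also have "\<dots> \<le> 1/2"
    using sum_inverse_consecutive_products[OF assms] unfolding f_def by simp
  finally show ?thesis unfolding f_def .
qed

(* For uniform \<pi> this has probability O(1/m\<^sup>2), where m is the number of bidders ranked above j. *)
definition charges :: "nat \<Rightarrow> (nat \<Rightarrow> real) \<Rightarrow> (nat \<Rightarrow> nat) \<Rightarrow> nat \<Rightarrow> nat \<Rightarrow> bool" where
  "charges n vv \<pi> j i \<longleftrightarrow> \<pi> i < \<pi> j \<and> (\<forall>k<n. ranks_above vv k j \<and> k \<noteq> i \<longrightarrow> \<pi> k < \<pi> i)"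

(* g i is the rounded bid of i and h j i the rounded lower estimate of j with respect to i. *)
definition wins :: "nat \<Rightarrow> (nat \<Rightarrow> real) \<Rightarrow> (nat \<Rightarrow> nat \<Rightarrow> real) \<Rightarrow> (nat \<Rightarrow> nat) \<Rightarrow> nat \<Rightarrow> bool" where
  "wins n g h \<pi> i \<longleftrightarrow> (\<forall>j<n. j \<noteq> i \<longrightarrow> gt_pi \<pi> (g i) i (h j i) j)"

lemma card_argmax_le_1:
  fixes \<pi> :: "'a \<Rightarrow> 'b::order"
  assumes "finite A" "inj_on \<pi> A"
  shows "card {i\<in>A. P i \<and> (\<forall>k\<in>A. P k \<longrightarrow> \<pi> k \<le> \<pi> i)} \<le> 1"
proof -
  define M where "M = {i\<in>A. P i \<and> (\<forall>k\<in>A. P k \<longrightarrow> \<pi> k \<le> \<pi> i)}"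
  have "\<forall>x\<in>M. \<forall>y\<in>M. x = y"
  proof (intro ballI)
    fix x y assume "x \<in> M" "y \<in> M"
    then have "\<pi> x = \<pi> y" "x \<in> A" "y \<in> A" unfolding M_def by (auto intro: order_antisym)
    then show "x = y" using assms(2) by (auto simp: inj_on_def)
  qed
  moreover have "finite M" using assms(1) unfolding M_def by simp
  ultimately show ?thesis unfolding M_def[symmetric] by (metis One_nat_def card_le_Suc0_iff_eq)
qed

lemma sum_off_diagonal_swap:
  fixes n :: nat
  shows "(\<Sum>i<n. \<Sum>j\<in>{..<n} - {i}. f i j) = (\<Sum>j<n. \<Sum>i\<in>{..<n} - {j}. (f i j :: real))"
proof -
  have "(\<Sum>i<n. \<Sum>j\<in>{..<n} - {i}. f i j) = (\<Sum>i<n. \<Sum>j\<in>{j\<in>{..<n}. i \<noteq> j}. f i j)"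
    by (intro sum.cong) auto
  also have "\<dots> = (\<Sum>j<n. \<Sum>i\<in>{i\<in>{..<n}. i \<noteq> j}. f i j)"
    by (rule sum.swap_restrict) simp_all
  also have "\<dots> = (\<Sum>j<n. \<Sum>i\<in>{..<n} - {j}. f i j)"
    by (intro sum.cong) auto
  finally show ?thesis .
qed

context
  fixes n :: nat and g :: "nat \<Rightarrow> real" and h :: "nat \<Rightarrow> nat \<Rightarrow> real"
    and vv :: "nat \<Rightarrow> real" and \<pi> :: "nat \<Rightarrow> nat"
  assumes n_pos: "0 < n"
    and g_mono: "\<And>j k. j < n \<Longrightarrow> k < n \<Longrightarrow> vv j \<le> vv k \<Longrightarrow> g j \<le> g k"
    and h_le_g: "\<And>j i. j < n \<Longrightarrow> i < n \<Longrightarrow> h j i \<le> g j"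
    and inj_\<pi>: "inj_on \<pi> {..<n}"
begin

lemma winner_charged:
  assumes i: "i < n" and win: "wins n g h \<pi> i"
    and not_top: "\<not> (g i = g (top_bidder n vv) \<and> (\<forall>k\<in>{..<n}. g k = g (top_bidder n vv) \<longrightarrow> \<pi> k \<le> \<pi> i))"
  shows "\<exists>j\<in>{..<n} - {i}. h j i < g j \<and> (j = top_bidder n vv \<or> charges n vv \<pi> j i)"
proof -
  define i0 where "i0 = top_bidder n vv"
  have i0: "i0 < n" "\<And>k. k < n \<Longrightarrow> g k \<le> g i0"
    unfolding i0_def using top_bidder_spec(1) top_bidder_max g_mono n_pos by auto
  show ?thesis
  proof (cases "i \<noteq> i0 \<and> h i0 i < g i0")
    case True
    then show ?thesis using i0 unfolding i0_def by auto
  next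
    case False
    then have "g i0 \<le> g i"
      using win i0(1) unfolding wins_def gt_pi_def by (cases "i = i0") force+
    then have gi: "g i = g i0" using i0(2)[OF i] by simp
    define A where "A = {k\<in>{..<n}. g k = g i \<and> \<pi> i < \<pi> k}"
    have "A \<noteq> {}" using not_top gi unfolding A_def i0_def by (auto simp: not_le)
    then obtain q where "q \<in> A" and q_top: "\<And>k. k \<in> A \<Longrightarrow> k \<noteq> q \<Longrightarrow> ranks_above vv q k"
      using ex_top_ranked[of A vv] unfolding A_def by auto
    then have q: "q < n" "q \<noteq> i" "g q = g i" "\<pi> i < \<pi> q" unfolding A_def by auto
    have "h q i < g q" using win q unfolding wins_def gt_pi_def by force
    moreover have "charges n vv \<pi> q i"
      unfolding charges_def
    proof (intro conjI allI impI)
      fix k assume k: "k < n" "ranks_above vv k q \<and> k \<noteq> i"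
      show "\<pi> k < \<pi> i"
      proof (rule ccontr)
        assume "\<not> \<pi> k < \<pi> i"
        then have "\<pi> i < \<pi> k" using inj_\<pi> k i unfolding inj_on_def by (metis lessThan_iff linorder_neqE)
        moreover have "g q \<le> g k" using g_mono[OF q(1) k(1)] k unfolding ranks_above_def by auto
        then have "g k = g i" using i0(2)[OF k(1)] gi q by simp
        ultimately have "ranks_above vv q k"
          using q_top k ranks_above_irrefl unfolding A_def by blast
        then show False using k ranks_above_asym by blast
      qed
    qed (use q in simp)
    ultimately show ?thesis using q by (intro bexI[of _ q]) auto
  qed
qed

lemma sum_winners_le:
  fixes w u :: "nat \<Rightarrow> real"
  assumes w_le: "\<And>i. i < n \<Longrightarrow> w i \<le> 1/8"
    and w_le_u: "\<And>i j. i < n \<Longrightarrow> j < n \<Longrightarrow> i \<noteq> j \<Longrightarrow> w i \<le> u j"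
    and u_nonneg: "\<And>j. j < n \<Longrightarrow> 0 \<le> u j"
  shows "(\<Sum>i<n. of_bool (wins n g h \<pi> i) * w i) \<le>
    1/8 + (\<Sum>j<n. \<Sum>i\<in>{..<n} - {j}. of_bool (h j i < g j \<and> (j = top_bidder n vv \<or> charges n vv \<pi> j i)) * u j)"
proof -
  define C where "C j i = of_bool (h j i < g j \<and> (j = top_bidder n vv \<or> charges n vv \<pi> j i)) * u j" for j i
  \<comment> \<open>the only winner that may stay uncharged\<close>
  define T where "T = {i\<in>{..<n}. g i = g (top_bidder n vv) \<and> (\<forall>k\<in>{..<n}. g k = g (top_bidder n vv) \<longrightarrow> \<pi> k \<le> \<pi> i)}"
  have C_nonneg: "0 \<le> C j i" if "j < n" for j i unfolding C_def using u_nonneg[OF that] by simp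
  have "of_bool (wins n g h \<pi> i) * w i \<le> of_bool (i \<in> T) * (1/8) + (\<Sum>j\<in>{..<n} - {i}. C j i)"
    if i: "i < n" for i
  proof (cases "wins n g h \<pi> i \<and> i \<notin> T")
    case True
    then obtain j where j: "j \<in> {..<n} - {i}" "C j i = u j"
      using winner_charged[OF i] i unfolding T_def C_def by fastforce
    then have "w i \<le> C j i" using w_le_u i by auto
    also have "\<dots> \<le> (\<Sum>j\<in>{..<n} - {i}. C j i)" using j(1) C_nonneg by (intro member_le_sum) auto
    finally show ?thesis using True by simp
  next
    case False
    have "0 \<le> (\<Sum>j\<in>{..<n} - {i}. C j i)" using C_nonneg by (intro sum_nonneg) auto
    then show ?thesis using False w_le[OF i] by auto
  qed
  then have "(\<Sum>i<n. of_bool (wins n g h \<pi> i) * w i)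
      \<le> (\<Sum>i<n. of_bool (i \<in> T) * (1/8)) + (\<Sum>i<n. \<Sum>j\<in>{..<n} - {i}. C j i)"
    by (subst sum.distrib[symmetric]) (rule sum_mono, simp)
  also have "(\<Sum>i<n. of_bool (i \<in> T) * (1/8 :: real)) = card T / 8"
  proof -
    have "{..<n} \<inter> T = T" unfolding T_def by auto
    then have "(\<Sum>i<n. of_bool (i \<in> T) :: real) = card T" by (simp add: sum_of_bool_eq)
    then show ?thesis by (simp add: sum_divide_distrib[symmetric])
  qed
  also have "(\<Sum>i<n. \<Sum>j\<in>{..<n} - {i}. C j i) = (\<Sum>j<n. \<Sum>i\<in>{..<n} - {j}. C j i)"
    by (rule sum_off_diagonal_swap)
  finally have "(\<Sum>i<n. of_bool (wins n g h \<pi> i) * w i) \<le> card T / 8 + (\<Sum>j<n. \<Sum>i\<in>{..<n} - {j}. C j i)" .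
  moreover have "real (card T) \<le> 1"
    using card_argmax_le_1[OF finite_lessThan inj_\<pi>, of "\<lambda>k. g k = g (top_bidder n vv)"]
    unfolding T_def by simp
  ultimately show ?thesis unfolding C_def by linarith
qed

end


section \<open>Truthfulness\<close>

lemma sprof_fun_upd: "s \<in> sprof n S \<Longrightarrow> i < n \<Longrightarrow> x \<in> S i \<Longrightarrow> s(i := x) \<in> sprof n S"
  unfolding sprof_def by (auto simp: PiE_iff extensional_def)

lemma sprof_mem: "s \<in> sprof n S \<Longrightarrow> i < n \<Longrightarrow> s i \<in> S i"
  unfolding sprof_def by auto

lemma valid_vals_pos: "valid_vals n S v \<Longrightarrow> s \<in> sprof n S \<Longrightarrow> j < n \<Longrightarrow> 0 < v j s"
  unfolding valid_vals_def by blast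

lemma lowest_bounds:
  assumes v: "valid_vals n S v" and s: "s \<in> sprof n S" and ij: "i < n" "j < n"
  shows "0 \<le> lowest S v i j s" "lowest S v i j s \<le> v j s"
proof -
  have pos: "0 < v j (s(i := x))" if "x \<in> S i" for x
    using valid_vals_pos[OF v sprof_fun_upd[OF s ij(1) that] ij(2)] .
  show "0 \<le> lowest S v i j s" unfolding lowest_def
    using pos sprof_mem[OF s ij(1)] by (intro cINF_greatest) (auto simp: less_imp_le)
  have "bdd_below ((\<lambda>x. v j (s(i := x))) ` S i)"
    using pos by (intro bdd_belowI[of _ 0]) (auto simp: less_imp_le)
  then have "lowest S v i j s \<le> v j (s(i := s i))"
    unfolding lowest_def using sprof_mem[OF s ij(1)] by (rule cINF_lower)
  then show "lowest S v i j s \<le> v j s" by simp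
qed

lemma sb_degree_spec:
  assumes v: "valid_vals n S v" and j: "j < n"
  shows "1 \<le> sb_degree n S (v j)" "self_bounding n S (v j) (sb_degree n S (v j))"
proof -
  have "(\<Sum>i<n. v j s - (INF x\<in>S i. v j (s(i := x)))) \<le> real n * v j s" if s: "s \<in> sprof n S" for s
  proof -
    have "(\<Sum>i<n. v j s - lowest S v i j s) \<le> (\<Sum>i<n. v j s)"
      using lowest_bounds(1)[OF v s _ j] by (intro sum_mono) auto
    then show ?thesis unfolding lowest_def by simp
  qed
  then have "n \<in> {1..n} \<and> self_bounding n S (v j) n"
    using j unfolding self_bounding_def by auto
  then have "sb_degree n S (v j) \<in> {1..n} \<and> self_bounding n S (v j) (sb_degree n S (v j))"
    unfolding sb_degree_def by (rule LeastI)
  then show "1 \<le> sb_degree n S (v j)" "self_bounding n S (v j) (sb_degree n S (v j))" by auto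
qed

lemma sum_value_minus_lowest_le:
  assumes "valid_vals n S v" "j < n" "s \<in> sprof n S"
  shows "(\<Sum>i<n. v j s - lowest S v i j s) \<le> real (sb_degree n S (v j)) * v j s"
  using sb_degree_spec(2)[OF assms(1,2)] assms(3) unfolding self_bounding_def lowest_def by blast

lemma eta_pos: "0 < eta n d i"
  unfolding eta_def by (simp add: add_pos_nonneg)

lemma eta_ge:
  assumes "i < n" "j < n" "j \<noteq> i"
  shows "4 * (real (d j) + 1) \<le> eta n d i"
proof -
  have "d j \<le> Max {d j | j. j < n \<and> j \<noteq> i}"
    using assms by (intro Max_ge) auto
  then show ?thesis unfolding eta_def by simp
qed

lemma ex_other_bidder: "2 \<le> (n::nat) \<Longrightarrow> i < n \<Longrightarrow> \<exists>j<n. j \<noteq> i"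
  by (rule exI[of _ "if i = 0 then 1 else 0"]) auto

lemma eta_le:
  assumes "i < n" "2 \<le> n"
  shows "eta n d i \<le> 4 * (real (Max {d j | j. j < n}) + 1)"
proof -
  have "Max {d j | j. j < n \<and> j \<noteq> i} \<le> Max {d j | j. j < n}"
    using ex_other_bidder[OF assms(2,1)] by (intro Max_mono) (auto simp: finite_image_set)
  then show ?thesis unfolding eta_def by simp
qed

lemma sets_cbid:
  assumes "0 \<le> t" "\<And>j. j < n \<Longrightarrow> j \<noteq> i \<Longrightarrow> 0 \<le> lowest S v i j s"
  shows "{r \<in> {0..<1}. cbid n S v s i t r \<pi>} \<in> sets lborel"
proof -
  have "Measurable.pred borel (\<lambda>r. j < n \<longrightarrow> j \<noteq> i \<longrightarrow> gt_pi \<pi> (fr r t) i (fr r (lowest S v i j s)) j)"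
    for j
  proof (cases "j < n \<and> j \<noteq> i")
    case True
    then have "0 \<le> lowest S v i j s" using assms(2) by blast
    then show ?thesis unfolding gt_pi_def using assms(1) by measurable
  qed simp
  then have "Measurable.pred borel (\<lambda>r. cbid n S v s i t r \<pi>)"
    unfolding cbid_def by (rule pred_intros_countable(1))
  then show ?thesis by (simp add: pred_def Collect_conj_eq sets_lborel)
qed

lemma cbid_mono:
  assumes "0 \<le> t1" "t1 \<le> t2" "cbid n S v s i t1 r \<pi>"
  shows "cbid n S v s i t2 r \<pi>"
proof -
  have "fr r t1 \<le> fr r t2" using assms fr_mono by simp
  then show ?thesis using assms(3) unfolding cbid_def gt_pi_def by force
qed

lemma xbid_mono:
  assumes v: "valid_vals n S v" and s: "s \<in> sprof n S" and i: "i < n"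
  shows "mono_on {0..} (xbid n S v d s i)"
proof (rule mono_onI)
  fix t1 t2 :: real assume "t1 \<in> {0..}" "t2 \<in> {0..}" "t1 \<le> t2"
  then have t: "0 \<le> t1" "0 \<le> t2" "t1 \<le> t2" by auto
  have sets: "{r \<in> {0..<1}. cbid n S v s i t r \<pi>} \<in> sets lborel" if "0 \<le> t" for t \<pi>
    using sets_cbid that lowest_bounds(1)[OF v s i] by blast
  have "measure lborel {r \<in> {0..<1}. cbid n S v s i t1 r \<pi>} \<le> measure lborel {r \<in> {0..<1}. cbid n S v s i t2 r \<pi>}"
    for \<pi>
    using t cbid_mono[of t1 t2] by (intro measure_mono_fmeasurable fmeasurable_subset_unit sets) auto
  then have "Ec n S v s i t1 \<le> Ec n S v s i t2"
    unfolding Ec_def by (intro divide_right_mono sum_mono) auto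
  then show "xbid n S v d s i t1 \<le> xbid n S v d s i t2"
    unfolding xbid_def using eta_pos by (intro divide_right_mono) (auto simp: less_imp_le)
qed

lemma xbid_nonneg: "0 \<le> xbid n S v d s i t"
  unfolding xbid_def Ec_def using eta_pos by (intro divide_nonneg_nonneg sum_nonneg) (auto simp: less_imp_le)

lemma myerson_utility_nonneg:
  fixes x :: "real \<Rightarrow> real"
  assumes "mono_on {0..} x" "\<And>t. 0 \<le> x t" "0 \<le> u"
  shows "0 \<le> x u * u - (x u * u - integral {0..u} x)"
proof -
  have "x integrable_on {0..u}"
    by (rule integrable_on_mono_on) (use mono_on_subset[OF assms(1)] in auto)
  then have "0 \<le> integral {0..u} x" using assms(2) by (intro integral_nonneg) auto
  then show ?thesis by simp
qed

lemma myerson_truthful_optimal: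
  fixes x :: "real \<Rightarrow> real"
  assumes mono: "mono_on {0..} x" and u: "0 \<le> u" and b: "0 \<le> b"
  shows "x b * u - (x b * b - integral {0..b} x) \<le> x u * u - (x u * u - integral {0..u} x)"
proof -
  have int: "x integrable_on {p..q}" if "0 \<le> p" for p q
    by (rule integrable_on_mono_on) (use mono_on_subset[OF mono] that in auto)
  show ?thesis
  proof (cases "b \<le> u")
    case True
    have "integral {b..u} (\<lambda>_. x b) \<le> integral {b..u} x"
      using int[of b u] b mono True by (intro integral_le) (auto intro: mono_onD)
    moreover have "integral {0..b} x + integral {b..u} x = integral {0..u} x"
      using Henstock_Kurzweil_Integration.integral_combine[OF b True int[of 0 u]] by simp
    ultimately show ?thesis using True by (simp add: integral_const_real algebra_simps)
  next
    case False
    have "integral {u..b} x \<le> integral {u..b} (\<lambda>_. x b)"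
      using int[of u b] u mono False by (intro integral_le) (auto intro: mono_onD)
    moreover have "integral {0..u} x + integral {u..b} x = integral {0..b} x"
      using Henstock_Kurzweil_Integration.integral_combine[OF u _ int[of 0 b]] False by simp
    ultimately show ?thesis using False by (simp add: integral_const_real algebra_simps)
  qed
qed

lemma lowest_cong:
  assumes "s \<in> sprof n S" "s' \<in> sprof n S" "\<And>j. j < n \<Longrightarrow> j \<noteq> i \<Longrightarrow> s j = s' j" "v j = v' j"
  shows "lowest S v i j s = lowest S v' i j s'"
proof -
  have "s k = s' k" if "k \<noteq> i" for k
  proof (cases "k < n")
    case False
    then have "k \<notin> {..<n}" by simp
    then show ?thesis using assms(1,2) PiE_arb unfolding sprof_def by metis
  qed (use assms(3) that in auto)
  then have "s(i := x) = s'(i := x)" for x by auto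
  then show ?thesis unfolding lowest_def using assms(4) by simp
qed

lemma alloc_depends_on_own_value_only:
  assumes "s \<in> sprof n S" "s' \<in> sprof n S"
    and "\<forall>j<n. j \<noteq> i \<longrightarrow> s j = s' j \<and> v j = v' j \<and> d j = d' j" "v i s = v' i s'"
  shows "alloc n S v d s i = alloc n S v' d' s' i"
proof -
  have "lowest S v i j s = lowest S v' i j s'" if "j < n" "j \<noteq> i" for j
    by (rule lowest_cong[OF assms(1,2)]) (use assms(3) that in auto)
  then have cb: "cbid n S v s i t r \<pi> = cbid n S v' s' i t r \<pi>" for t r \<pi>
    unfolding cbid_def by simp
  have "{d j | j. j < n \<and> j \<noteq> i} = {d' j | j. j < n \<and> j \<noteq> i}" using assms(3) by force
  then have et: "eta n d i = eta n d' i" unfolding eta_def by simp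
  show ?thesis unfolding alloc_def xbid_def Ec_def cb et assms(4) ..
qed

lemma xbid_fun_upd_self:
  "xbid n S (v(i := vi')) (d(i := di')) (s(i := si')) i = xbid n S v d s i"
proof -
  have cb: "cbid n S (v(i := vi')) (s(i := si')) i t r \<pi> = cbid n S v s i t r \<pi>" for t r \<pi>
    unfolding cbid_def lowest_def by simp
  have "{(d(i := di')) j | j. j < n \<and> j \<noteq> i} = {d j | j. j < n \<and> j \<noteq> i}" by force
  then have et: "eta n (d(i := di')) i = eta n d i" unfolding eta_def by simp
  show ?thesis unfolding xbid_def Ec_def cb et ..
qed

lemma epic_ir:
  assumes v: "valid_vals n S v" and i: "i < n" and s: "s \<in> sprof n S"
  defines "D \<equiv> \<lambda>j. sb_degree n S (v j)"
  shows "0 \<le> alloc n S v D s i * v i s - pay n S v D s i"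
    and "si' \<in> S i \<Longrightarrow> \<forall>u\<in>sprof n S. 0 < vi' u \<Longrightarrow>
          alloc n S (v(i := vi')) (D(i := di')) (s(i := si')) i * v i s
            - pay n S (v(i := vi')) (D(i := di')) (s(i := si')) i
          \<le> alloc n S v D s i * v i s - pay n S v D s i"
proof -
  define x where "x = xbid n S v D s i"
  have mono: "mono_on {0..} x" unfolding x_def using xbid_mono[OF v s i] .
  have u: "0 \<le> v i s" using valid_vals_pos[OF v s i] by simp
  have truthful: "alloc n S v D s i * v i s - pay n S v D s i
      = x (v i s) * v i s - (x (v i s) * v i s - integral {0..v i s} x)"
    unfolding alloc_def pay_def x_def ..
  show "0 \<le> alloc n S v D s i * v i s - pay n S v D s i"
    unfolding truthful by (rule myerson_utility_nonneg[OF mono _ u]) (simp add: x_def xbid_nonneg)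
  assume si': "si' \<in> S i" and vi': "\<forall>u\<in>sprof n S. 0 < vi' u"
  define b where "b = vi' (s(i := si'))"
  have "0 < b" unfolding b_def using vi' sprof_fun_upd[OF s i si'] by blast
  have "xbid n S (v(i := vi')) (D(i := di')) (s(i := si')) i = x"
    unfolding x_def by (rule xbid_fun_upd_self)
  then have deviation: "alloc n S (v(i := vi')) (D(i := di')) (s(i := si')) i * v i s
          - pay n S (v(i := vi')) (D(i := di')) (s(i := si')) i
        = x b * v i s - (x b * b - integral {0..b} x)"
    unfolding alloc_def pay_def b_def by simp
  show "alloc n S (v(i := vi')) (D(i := di')) (s(i := si')) i * v i s
          - pay n S (v(i := vi')) (D(i := di')) (s(i := si')) i
        \<le> alloc n S v D s i * v i s - pay n S v D s i"
    unfolding truthful deviation by (rule myerson_truthful_optimal[OF mono u]) (use \<open>0 < b\<close> in simp)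
qed


section \<open>Feasibility\<close>

definition win_set :: "nat \<Rightarrow> (nat \<Rightarrow> real set) \<Rightarrow> (nat \<Rightarrow> (nat \<Rightarrow> real) \<Rightarrow> real) \<Rightarrow> (nat \<Rightarrow> real)
    \<Rightarrow> nat \<Rightarrow> (nat \<Rightarrow> nat) \<Rightarrow> real set" where
  "win_set n S v s i \<pi> = {r \<in> {0..<1}. cbid n S v s i (v i s) r \<pi>}"

(* Only for these r can the signal of i affect the rounded value of j. *)
definition sensitive_set :: "(nat \<Rightarrow> real set) \<Rightarrow> (nat \<Rightarrow> (nat \<Rightarrow> real) \<Rightarrow> real) \<Rightarrow> (nat \<Rightarrow> real)
    \<Rightarrow> nat \<Rightarrow> nat \<Rightarrow> real set" where
  "sensitive_set S v s j i = {r \<in> {0..<1}. fr r (lowest S v i j s) < fr r (v j s)}"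

lemma alloc_eq_sum_win_set:
  "alloc n S v d s i = (\<Sum>\<pi>\<in>Perms n. measure lborel (win_set n S v s i \<pi>)) / (fact n * eta n d i)"
  unfolding alloc_def xbid_def Ec_def win_set_def by simp

lemma win_set_measurable:
  assumes "valid_vals n S v" "s \<in> sprof n S" "i < n"
  shows "win_set n S v s i \<pi> \<in> sets lborel" "win_set n S v s i \<pi> \<subseteq> {0..<1}"
proof -
  show "win_set n S v s i \<pi> \<in> sets lborel"
    unfolding win_set_def using lowest_bounds(1)[OF assms(1,2,3)] valid_vals_pos[OF assms]
    by (intro sets_cbid) (auto simp: less_imp_le)
qed (auto simp: win_set_def)

lemma sensitive_set_measurable:
  assumes "valid_vals n S v" "s \<in> sprof n S" "i < n" "j < n"
  shows "sensitive_set S v s j i \<in> sets lborel" "sensitive_set S v s j i \<subseteq> {0..<1}"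
proof -
  show "sensitive_set S v s j i \<in> sets lborel"
    unfolding sensitive_set_def using lowest_bounds(1)[OF assms] valid_vals_pos[OF assms(1,2,4)]
    by (intro sets_fr_less_fr) auto
qed (auto simp: sensitive_set_def)

lemma sum_indicator_win_set_le:
  assumes n: "2 \<le> n" and v: "valid_vals n S v" and s: "s \<in> sprof n S" and \<pi>: "\<pi> permutes {..<n}"
    and d: "\<And>j. j < n \<Longrightarrow> 1 \<le> d j"
  defines "vv \<equiv> \<lambda>j. v j s"
  shows "(\<Sum>i<n. indicator (win_set n S v s i \<pi>) r * (1 / eta n d i)) \<le> indicator {0..<1} r * (1/8)
    + (\<Sum>j<n. \<Sum>i\<in>{..<n} - {j}. indicator (sensitive_set S v s j i) r
         * (of_bool (j = top_bidder n vv \<or> charges n vv \<pi> j i) / (4 * (real (d j) + 1))))"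
proof (cases "r \<in> {0..<1}")
  case False
  then have "indicator (win_set n S v s i \<pi>) r = (0::real)" "indicator (sensitive_set S v s j i) r = (0::real)"
    for i j unfolding win_set_def sensitive_set_def by auto
  then show ?thesis using False by simp
next
  case True
  define g where "g k = fr r (vv k)" for k
  define h where "h j i = fr r (lowest S v i j s)" for j i
  have eta: "1 / eta n d i \<le> 1 / (4 * (real (d j) + 1))" if "i < n" "j < n" "i \<noteq> j" for i j
    using eta_ge[OF that(1,2), of d] that d[OF that(2)] eta_pos[of n d i] by (intro divide_left_mono) auto
  have "(\<Sum>i<n. of_bool (wins n g h \<pi> i) * (1 / eta n d i)) \<le> 1/8 + (\<Sum>j<n. \<Sum>i\<in>{..<n} - {j}.
      of_bool (h j i < g j \<and> (j = top_bidder n vv \<or> charges n vv \<pi> j i)) * (1 / (4 * (real (d j) + 1))))"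
  proof (rule sum_winners_le)
    show "g j \<le> g k" if "j < n" "k < n" "vv j \<le> vv k" for j k
      unfolding g_def using fr_mono valid_vals_pos[OF v s] that by (simp add: vv_def less_imp_le)
    show "h j i \<le> g j" if "j < n" "i < n" for j i
      unfolding g_def h_def vv_def using fr_mono lowest_bounds[OF v s that(2,1)] by simp
    show "inj_on \<pi> {..<n}" using \<pi> by (rule permutes_inj_on)
    show "1 / eta n d i \<le> 1/8" if i: "i < n" for i
    proof -
      obtain j where j: "j < n" "j \<noteq> i" using ex_other_bidder[OF n i] by auto
      have "8 \<le> eta n d i" using eta_ge[OF i j, of d] d[OF j(1)] by simp
      then show ?thesis using eta_pos[of n d i] by (simp add: field_simps)
    qed
  qed (use n d eta in auto)
  then show ?thesis
    using True unfolding win_set_def sensitive_set_def cbid_def wins_def g_def h_def vv_def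
    by (simp add: indicator_def of_bool_conj)
qed

lemma sum_measure_win_set_le:
  assumes n: "2 \<le> n" and v: "valid_vals n S v" and s: "s \<in> sprof n S" and \<pi>: "\<pi> permutes {..<n}"
    and d: "\<And>j. j < n \<Longrightarrow> 1 \<le> d j"
  defines "vv \<equiv> \<lambda>j. v j s"
  defines "c \<equiv> \<lambda>j i. of_bool (j = top_bidder n vv \<or> charges n vv \<pi> j i) / (4 * (real (d j) + 1))"
  shows "(\<Sum>i<n. measure lborel (win_set n S v s i \<pi>) * (1 / eta n d i))
    \<le> 1/8 + (\<Sum>j<n. \<Sum>i\<in>{..<n} - {j}. measure lborel (sensitive_set S v s j i) * c j i)"
proof -
  have W_int: "integrable lborel (\<lambda>r. \<Sum>i<n. indicator (win_set n S v s i \<pi>) r * (1 / eta n d i))"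
    and W_eq: "(\<integral>r. (\<Sum>i<n. indicator (win_set n S v s i \<pi>) r * (1 / eta n d i)) \<partial>lborel)
      = (\<Sum>i<n. measure lborel (win_set n S v s i \<pi>) * (1 / eta n d i))"
    using integral_sum_indicator[of "{..<n}" "\<lambda>i. win_set n S v s i \<pi>" "\<lambda>i. 1 / eta n d i"]
      win_set_measurable[OF v s] by auto
  have E_int: "integrable lborel (\<lambda>r. \<Sum>i\<in>{..<n} - {j}. indicator (sensitive_set S v s j i) r * c j i)"
    and E_eq: "(\<integral>r. (\<Sum>i\<in>{..<n} - {j}. indicator (sensitive_set S v s j i) r * c j i) \<partial>lborel)
      = (\<Sum>i\<in>{..<n} - {j}. measure lborel (sensitive_set S v s j i) * c j i)" if "j < n" for j
    using integral_sum_indicator[of "{..<n} - {j}" "\<lambda>i. sensitive_set S v s j i" "c j"]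
      sensitive_set_measurable[OF v s _ that] by auto
  have unit_int: "integrable lborel (\<lambda>r. indicator {0..<1::real} r * (1/8 :: real))"
    by (intro integrable_mult_left integrable_indicator_subset_unit) auto
  have E2_int: "integrable lborel
      (\<lambda>r. \<Sum>j<n. \<Sum>i\<in>{..<n} - {j}. indicator (sensitive_set S v s j i) r * c j i)"
    by (rule Bochner_Integration.integrable_sum) (rule E_int, simp)
  have "(\<Sum>i<n. measure lborel (win_set n S v s i \<pi>) * (1 / eta n d i))
      \<le> (\<integral>r. indicator {0..<1} r * (1/8)
            + (\<Sum>j<n. \<Sum>i\<in>{..<n} - {j}. indicator (sensitive_set S v s j i) r * c j i) \<partial>lborel)"
    unfolding W_eq[symmetric] c_def vv_def
    using sum_indicator_win_set_le[OF n v s \<pi> d] W_int unit_int E2_int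
    by (intro integral_mono) (auto simp: c_def vv_def)
  also have "\<dots> = 1/8 + (\<Sum>j<n. \<integral>r. (\<Sum>i\<in>{..<n} - {j}. indicator (sensitive_set S v s j i) r * c j i) \<partial>lborel)"
    using unit_int E2_int E_int by (simp add: Bochner_Integration.integral_sum integral_mult_left_zero)
  also have "\<dots> = 1/8 + (\<Sum>j<n. \<Sum>i\<in>{..<n} - {j}. measure lborel (sensitive_set S v s j i) * c j i)"
    using E_eq by simp
  finally show ?thesis .
qed

lemma charges_imp_top_two:
  assumes "charges n vv \<pi> j i" "i \<noteq> j"
  shows "top_two (insert j (insert i {k\<in>{..<n}. ranks_above vv k j \<and> k \<noteq> i})) j i \<pi>"
  using assms unfolding charges_def top_two_def by (auto intro: less_trans)

lemma card_charges_le: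
  fixes vv :: "nat \<Rightarrow> real"
  assumes "j < n" "i < n" "i \<noteq> j"
  defines "m \<equiv> real (count_above n vv j)" and "a \<equiv> of_bool (ranks_above vv i j)"
  shows "real (card {\<pi> \<in> Perms n. charges n vv \<pi> j i}) \<le> fact n / ((m + 2 - a) * (m + 1 - a))"
proof -
  define K where "K = {k\<in>{..<n}. ranks_above vv k j \<and> k \<noteq> i}"
  define X where "X = insert j (insert i K)"
  have X: "X \<subseteq> {..<n}" unfolding X_def K_def using assms by auto
  have K: "K = {k\<in>{..<n}. ranks_above vv k j} - {i}" unfolding K_def by auto
  have "real (card K) = m - a"
  proof (cases "ranks_above vv i j")
    case True
    then have i: "i \<in> {k\<in>{..<n}. ranks_above vv k j}" using assms(2) by simp
    then have "card K = count_above n vv j - 1"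
      unfolding K count_above_def by (simp add: card_Diff_singleton)
    moreover have "1 \<le> count_above n vv j"
      unfolding count_above_def using i by (auto simp: Suc_le_eq card_gt_0_iff)
    ultimately show ?thesis unfolding m_def a_def using True by (simp add: of_nat_diff)
  next
    case False
    then have "card K = count_above n vv j" unfolding K count_above_def by simp
    then show ?thesis unfolding m_def a_def using False by simp
  qed
  moreover have cardX: "card X = card K + 2"
    unfolding X_def K_def using assms(3) by (simp add: ranks_above_irrefl)
  ultimately have cX: "real (card X) = m + 2 - a" "real (card X) - 1 = m + 1 - a" by simp_all
  have "card {\<pi> \<in> Perms n. charges n vv \<pi> j i} \<le> card {\<pi> \<in> Perms n. top_two X j i \<pi>}"
    using charges_imp_top_two[OF _ assms(3)] finite_permutations[of "{..<n}"]
    unfolding X_def K_def by (intro card_mono) auto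
  moreover have "real (card {\<pi> \<in> Perms n. top_two X j i \<pi>}) * ((m + 2 - a) * (m + 1 - a)) \<le> fact n"
    using card_top_two_le[OF X, of j i] assms unfolding cX[symmetric] X_def by auto
  moreover have "0 < (m + 2 - a) * (m + 1 - a)" unfolding cX[symmetric] using cardX by simp
  ultimately show ?thesis by (simp add: pos_le_divide_eq) (meson of_nat_le_iff order_trans mult_right_mono less_imp_le)
qed


lemma sum_charge_weights_le:
  fixes P :: "nat \<Rightarrow> real" and above :: "nat \<Rightarrow> bool" and m D :: real
  assumes "finite I" "1 \<le> m" "\<And>i. i \<in> I \<Longrightarrow> 0 \<le> P i" "\<And>i. i \<in> I \<Longrightarrow> P i \<le> 1"
    and "(\<Sum>i\<in>I. P i) \<le> D" "real (card {i\<in>I. above i}) \<le> m"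
  shows "(\<Sum>i\<in>I. P i / ((m + 2 - of_bool (above i)) * (m + 1 - of_bool (above i))))
    \<le> (D + 2) / ((m + 1) * (m + 2))"
proof -
  define a where "a = 1 / ((m + 1) * (m + 2))"
  define b where "b = 2 / (m * (m + 1) * (m + 2))"
  have ab: "0 \<le> a" "0 \<le> b" unfolding a_def b_def using assms(2) by auto
  have m: "m \<noteq> 0" "m + 1 \<noteq> 0" "m + 2 \<noteq> 0" using assms(2) by auto
  have q: "1 / ((m + 2 - of_bool (above i)) * (m + 1 - of_bool (above i))) = a + of_bool (above i) * b" for i
  proof (cases "above i")
    case True
    have "1 / ((m + 2 - 1) * (m + 1 - 1)) = 1 / ((m + 1) * m)" by (simp add: algebra_simps)
    also have "\<dots> = a + b" unfolding a_def b_def using m by (simp add: divide_simps)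
    finally show ?thesis using True by simp
  qed (simp add: a_def algebra_simps)
  have "P i / ((m + 2 - of_bool (above i)) * (m + 1 - of_bool (above i)))
      = a * P i + b * (of_bool (above i) * P i)" for i
    using arg_cong[OF q[of i], of "\<lambda>t. P i * t"] by (simp add: algebra_simps)
  then have "(\<Sum>i\<in>I. P i / ((m + 2 - of_bool (above i)) * (m + 1 - of_bool (above i))))
      = a * (\<Sum>i\<in>I. P i) + b * (\<Sum>i\<in>I. of_bool (above i) * P i)"
    by (simp add: sum.distrib sum_distrib_left)
  also have "\<dots> \<le> a * D + b * m"
  proof -
    have "(\<Sum>i\<in>I. of_bool (above i) * P i) \<le> (\<Sum>i\<in>I. of_bool (above i))"
      using assms(4) by (intro sum_mono) auto
    also have "\<dots> = real (card {i\<in>I. above i})"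
      using assms(1) by (simp add: sum_of_bool_eq Collect_conj_eq Int_commute)
    finally have "(\<Sum>i\<in>I. of_bool (above i) * P i) \<le> m" using assms(6) by linarith
    then show ?thesis using assms(5) ab by (intro add_mono mult_left_mono) auto
  qed
  also have "\<dots> = (D + 2) / ((m + 1) * (m + 2))"
    unfolding a_def b_def using m by (simp add: divide_simps)
  finally show ?thesis .
qed

lemma sum_measure_sensitive_set_le:
  assumes v: "valid_vals n S v" and s: "s \<in> sprof n S" and j: "j < n"
  shows "(\<Sum>i\<in>{..<n} - {j}. measure lborel (sensitive_set S v s j i)) \<le> 2 * real (sb_degree n S (v j))"
proof -
  have vj: "0 < v j s" using valid_vals_pos[OF v s j] .
  have "(\<Sum>i\<in>{..<n} - {j}. measure lborel (sensitive_set S v s j i))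
      \<le> (\<Sum>i\<in>{..<n} - {j}. 2 * (v j s - lowest S v i j s) / v j s)"
    unfolding sensitive_set_def using lowest_bounds[OF v s _ j] vj
    by (intro sum_mono measure_fr_less_fr_le) auto
  also have "\<dots> \<le> (\<Sum>i<n. 2 * (v j s - lowest S v i j s) / v j s)"
    using lowest_bounds[OF v s _ j] vj by (intro sum_mono2) auto
  also have "\<dots> = 2 / v j s * (\<Sum>i<n. v j s - lowest S v i j s)"
    by (simp add: sum_distrib_left)
  also have "\<dots> \<le> 2 / v j s * (real (sb_degree n S (v j)) * v j s)"
    using sum_value_minus_lowest_le[OF v j s] vj by (intro mult_left_mono) auto
  also have "\<dots> = 2 * real (sb_degree n S (v j))" using vj by simp
  finally show ?thesis .
qed

lemma charges_to_bidder_le: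
  assumes v: "valid_vals n S v" and s: "s \<in> sprof n S" and j: "j < n"
  defines "vv \<equiv> \<lambda>j. v j s" and "d \<equiv> sb_degree n S (v j)"
  defines "m \<equiv> real (count_above n vv j)"
  shows "(\<Sum>i\<in>{..<n} - {j}. measure lborel (sensitive_set S v s j i)
            * ((\<Sum>\<pi>\<in>Perms n. of_bool (j = top_bidder n vv \<or> charges n vv \<pi> j i)) / fact n))
          / (4 * (real d + 1))
    \<le> (if j = top_bidder n vv then 1 else 1 / ((m + 1) * (m + 2))) / 2"
proof -
  define P where "P i = measure lborel (sensitive_set S v s j i)" for i
  have P: "0 \<le> P i" "P i \<le> 1" if "i < n" for i
    unfolding P_def using sensitive_set_measurable[OF v s that j] by (auto intro: measure_subset_unit_le_1)
  have sumP: "(\<Sum>i\<in>{..<n} - {j}. P i) \<le> 2 * real d"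
    unfolding P_def d_def by (rule sum_measure_sensitive_set_le[OF v s j])
  have d: "1 \<le> real d" unfolding d_def using sb_degree_spec(1)[OF v j] by simp
  have card_perms: "real (card (Perms n)) = fact n" using card_permutations[of "{..<n}" n] by simp
  show ?thesis
  proof (cases "j = top_bidder n vv")
    case True
    then have "(\<Sum>i\<in>{..<n} - {j}. P i * ((\<Sum>\<pi>\<in>Perms n. of_bool (j = top_bidder n vv \<or> charges n vv \<pi> j i)) / fact n))
        / (4 * (real d + 1)) = (\<Sum>i\<in>{..<n} - {j}. P i) / (4 * (real d + 1))"
      using card_perms by simp
    also have "\<dots> \<le> 2 * real d / (4 * (real d + 1))"
      using sumP d by (intro divide_right_mono) auto
    also have "\<dots> \<le> 1/2" using d by (simp add: field_simps)
    finally show ?thesis using True unfolding P_def by simp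
  next
    case False
    define above where "above i = ranks_above vv i j" for i
    have freq: "(\<Sum>\<pi>\<in>Perms n. of_bool (charges n vv \<pi> j i)) / fact n
        \<le> 1 / ((m + 2 - of_bool (above i)) * (m + 1 - of_bool (above i)))" if "i \<in> {..<n} - {j}" for i
      using card_charges_le[of j n i vv] that j finite_permutations[of "{..<n}"]
      unfolding m_def above_def by (simp add: sum_of_bool_eq Collect_conj_eq Int_commute field_simps)
    have "(\<Sum>i\<in>{..<n} - {j}. P i * ((\<Sum>\<pi>\<in>Perms n. of_bool (charges n vv \<pi> j i)) / fact n))
        \<le> (\<Sum>i\<in>{..<n} - {j}. P i / ((m + 2 - of_bool (above i)) * (m + 1 - of_bool (above i))))"
    proof (rule sum_mono)
      fix i assume i: "i \<in> {..<n} - {j}"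
      then have "P i * ((\<Sum>\<pi>\<in>Perms n. of_bool (charges n vv \<pi> j i)) / fact n)
          \<le> P i * (1 / ((m + 2 - of_bool (above i)) * (m + 1 - of_bool (above i))))"
        using P(1) freq by (intro mult_left_mono) auto
      then show "P i * ((\<Sum>\<pi>\<in>Perms n. of_bool (charges n vv \<pi> j i)) / fact n)
          \<le> P i / ((m + 2 - of_bool (above i)) * (m + 1 - of_bool (above i)))" by simp
    qed
    also have "\<dots> \<le> (2 * real d + 2) / ((m + 1) * (m + 2))"
    proof (rule sum_charge_weights_le)
      show "1 \<le> m" unfolding m_def using count_above_pos[OF j False] by simp
      have "{i \<in> {..<n} - {j}. above i} \<subseteq> {k\<in>{..<n}. ranks_above vv k j}" unfolding above_def by auto
      then show "real (card {i \<in> {..<n} - {j}. above i}) \<le> m"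
        unfolding m_def count_above_def by (simp add: card_mono)
    qed (use P sumP in auto)
    finally have "(\<Sum>i\<in>{..<n} - {j}. P i * ((\<Sum>\<pi>\<in>Perms n. of_bool (charges n vv \<pi> j i)) / fact n))
        / (4 * (real d + 1)) \<le> (2 * real d + 2) / ((m + 1) * (m + 2)) / (4 * (real d + 1))"
      using d by (intro divide_right_mono) auto
    also have "\<dots> = 1 / ((m + 1) * (m + 2)) / 2"
    proof -
      have "m + 1 \<noteq> 0" "m + 2 \<noteq> 0" "real d + 1 \<noteq> 0" using d unfolding m_def by linarith+
      then show ?thesis by (simp add: divide_simps) (simp add: algebra_simps)
    qed
    finally show ?thesis using False unfolding P_def by simp
  qed
qed


lemma alloc_sum_le_1:
  assumes n: "2 \<le> n" and v: "valid_vals n S v" and s: "s \<in> sprof n S"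
  shows "(\<Sum>i<n. alloc n S v (\<lambda>j. sb_degree n S (v j)) s i) \<le> 1"
proof -
  define d where "d j = sb_degree n S (v j)" for j
  define vv where "vv = (\<lambda>j. v j s)"
  define F where "F = (fact n :: real)"
  define \<mu> where "\<mu> j i = measure lborel (sensitive_set S v s j i)" for j i
  define cb where "cb \<pi> j i = (of_bool (j = top_bidder n vv \<or> charges n vv \<pi> j i) :: real)" for \<pi> j i
  define m where "m j = real (count_above n vv j)" for j
  have d: "1 \<le> d j" if "j < n" for j using sb_degree_spec(1)[OF v that] unfolding d_def .
  have F: "0 < F" "real (card (Perms n)) = F" unfolding F_def using card_permutations[of "{..<n}" n] by simp_all
  have "(\<Sum>i<n. alloc n S v d s i)
      = (\<Sum>\<pi>\<in>Perms n. \<Sum>i<n. measure lborel (win_set n S v s i \<pi>) * (1 / eta n d i)) / F"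
    unfolding alloc_eq_sum_win_set F_def
    by (simp add: sum_divide_distrib sum_distrib_right sum.swap[of _ "{..<n}"] mult.commute)
  also have "\<dots> \<le> (\<Sum>\<pi>\<in>Perms n. 1/8 + (\<Sum>j<n. \<Sum>i\<in>{..<n} - {j}. \<mu> j i * (cb \<pi> j i / (4 * (real (d j) + 1))))) / F"
    using sum_measure_win_set_le[where d = d, OF n v s _ d] F(1)
    by (intro divide_right_mono sum_mono) (auto simp: \<mu>_def cb_def vv_def)
  also have "\<dots> = 1/8 + (\<Sum>j<n. \<Sum>i\<in>{..<n} - {j}. \<Sum>\<pi>\<in>Perms n. \<mu> j i * (cb \<pi> j i / (4 * (real (d j) + 1)))) / F"
  proof -
    have "(\<Sum>\<pi>\<in>Perms n. \<Sum>j<n. \<Sum>i\<in>{..<n} - {j}. \<mu> j i * (cb \<pi> j i / (4 * (real (d j) + 1))))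
        = (\<Sum>j<n. \<Sum>i\<in>{..<n} - {j}. \<Sum>\<pi>\<in>Perms n. \<mu> j i * (cb \<pi> j i / (4 * (real (d j) + 1))))"
      by (subst sum.swap) (rule sum.cong[OF refl], rule sum.swap)
    then show ?thesis using F by (simp add: sum.distrib add_divide_distrib)
  qed
  also have "\<dots> = 1/8 + (\<Sum>j<n. (\<Sum>i\<in>{..<n} - {j}. \<mu> j i * ((\<Sum>\<pi>\<in>Perms n. cb \<pi> j i) / F))
      / (4 * (real (d j) + 1)))"
    by (simp add: sum_divide_distrib sum_distrib_left mult.commute)
  also have "\<dots> \<le> 1/8 + (\<Sum>j<n. (if j = top_bidder n vv then 1 else 1 / ((m j + 1) * (m j + 2))) / 2)"
    unfolding \<mu>_def cb_def d_def vv_def m_def F_def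
    by (intro add_left_mono sum_mono charges_to_bidder_le[OF v s]) simp
  also have "\<dots> = 1/8 + (1 + (\<Sum>j\<in>{..<n} - {top_bidder n vv}. 1 / ((m j + 1) * (m j + 2)))) / 2"
  proof -
    have "(\<Sum>j<n. if j = top_bidder n vv then 1 else 1 / ((m j + 1) * (m j + 2)))
        = 1 + (\<Sum>j\<in>{..<n} - {top_bidder n vv}. 1 / ((m j + 1) * (m j + 2)))"
      using top_bidder_spec(1)[of n vv] n by (simp add: sum.If_cases Diff_eq)
    then show ?thesis by (simp only: sum_divide_distrib[symmetric])
  qed
  also have "\<dots> \<le> 1/8 + (1 + 1/2) / 2"
    using sum_count_above_le[of n vv] n unfolding m_def by simp
  finally show ?thesis unfolding d_def by simp
qed


section \<open>Approximation\<close>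

lemma ex_winner_max:
  assumes "0 < n" and h_le_g: "\<And>j i. j < n \<Longrightarrow> i < n \<Longrightarrow> h j i \<le> g j" and inj: "inj_on \<pi> {..<n}"
  shows "\<exists>w<n. (\<forall>k<n. g k \<le> g w) \<and> wins n g h \<pi> w"
proof -
  define W where "W = {k\<in>{..<n}. g k = Max (g ` {..<n})}"
  have "Max (g ` {..<n}) \<in> g ` {..<n}" using assms(1) by (intro Max_in) auto
  then have "W \<noteq> {}" "finite W" unfolding W_def by auto
  then have "Max (\<pi> ` W) \<in> \<pi> ` W" by simp
  then obtain w where w: "w \<in> W" "\<pi> w = Max (\<pi> ` W)" by auto
  have g_max: "g k \<le> g w" if "k < n" for k using w(1) that unfolding W_def by simp
  have "gt_pi \<pi> (g w) w (h j w) j" if j: "j < n" "j \<noteq> w" for j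
  proof (cases "h j w < g w")
    case False
    moreover have "h j w \<le> g j" using h_le_g w(1) j unfolding W_def by auto
    ultimately have "g j = g w" using g_max[OF j(1)] by linarith
    then have "j \<in> W" using j w(1) unfolding W_def by simp
    then have "\<pi> j \<le> \<pi> w" unfolding w(2) using \<open>finite W\<close> by simp
    moreover have "\<pi> j \<noteq> \<pi> w" using inj j w(1) unfolding W_def inj_on_def by auto
    ultimately show ?thesis using False h_le_g[of j w] j w(1) \<open>g j = g w\<close> unfolding W_def gt_pi_def by auto
  qed (simp add: gt_pi_def)
  then show ?thesis using w(1) g_max unfolding W_def wins_def by blast
qed

lemma fr_max_le_sum_win_set:
  assumes n: "0 < n" and v: "valid_vals n S v" and s: "s \<in> sprof n S" and \<pi>: "\<pi> permutes {..<n}"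
    and r: "r \<in> {0..<1}"
  shows "fr r (Max {v i s | i. i < n}) \<le> (\<Sum>i<n. indicator (win_set n S v s i \<pi>) r * v i s)"
proof -
  obtain k where k: "k < n" "Max {v i s | i. i < n} = v k s"
    using Max_in[of "{v i s | i. i < n}"] n by auto
  obtain w where w: "w < n" "\<forall>k<n. fr r (v k s) \<le> fr r (v w s)"
    "wins n (\<lambda>k. fr r (v k s)) (\<lambda>j i. fr r (lowest S v i j s)) \<pi> w"
    using ex_winner_max[OF n, of "\<lambda>j i. fr r (lowest S v i j s)" "\<lambda>k. fr r (v k s)" \<pi>]
      fr_mono lowest_bounds[OF v s] permutes_inj_on[OF \<pi>] by blast
  then have "r \<in> win_set n S v s w \<pi>"
    using r unfolding win_set_def cbid_def wins_def by simp
  then have "fr r (Max {v i s | i. i < n}) \<le> indicator (win_set n S v s w \<pi>) r * v w s"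
    using w(2) k fr_le_self[of "v w s" r] valid_vals_pos[OF v s w(1)] by fastforce
  also have "\<dots> \<le> (\<Sum>i<n. indicator (win_set n S v s i \<pi>) r * v i s)"
    using w(1) valid_vals_pos[OF v s] by (intro member_le_sum) (auto simp: less_imp_le)
  finally show ?thesis .
qed

lemma welfare_given_perm_ge:
  assumes n: "0 < n" and v: "valid_vals n S v" and s: "s \<in> sprof n S" and \<pi>: "\<pi> permutes {..<n}"
  shows "Max {v i s | i. i < n} / (2 * ln 2) \<le> (\<Sum>i<n. measure lborel (win_set n S v s i \<pi>) * v i s)"
proof -
  define V where "V = Max {v i s | i. i < n}"
  obtain k where k: "k < n" "V = v k s"
    using Max_in[of "{v i s | i. i < n}"] n unfolding V_def by auto
  have V_pos: "0 < V" using valid_vals_pos[OF v s k(1)] k by simp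
  define g where "g r = indicator {0..<1::real} r * fr r V" for r
  have g_nonneg: "\<And>r. 0 \<le> g r" unfolding g_def using fr_nonneg V_pos by simp
  have int_g: "integrable lborel g"
  proof (rule Bochner_Integration.integrable_bound)
    show "integrable lborel (\<lambda>r. indicator {0..<1::real} r * V)"
      by (intro integrable_mult_left integrable_indicator_subset_unit) auto
    show "g \<in> borel_measurable lborel" unfolding g_def using V_pos by (auto simp: measurable_lborel1)
    show "AE r in lborel. norm (g r) \<le> norm (indicator {0..<1::real} r * V)"
      unfolding g_def using V_pos fr_nonneg[of V] fr_le_self[of V] by (intro AE_I2) (auto simp: indicator_def)
  qed
  have "ennreal (V / (2 * ln 2)) \<le> (\<integral>\<^sup>+ r. ennreal (g r) \<partial>lborel)"
    unfolding g_def by (rule nn_integral_fr_ge[OF V_pos])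
  also have "\<dots> = ennreal (\<integral>r. g r \<partial>lborel)"
    using g_nonneg by (intro nn_integral_eq_integral[OF int_g]) auto
  finally have "ennreal (V / (2 * ln 2)) \<le> ennreal (\<integral>r. g r \<partial>lborel)" .
  then have "V / (2 * ln 2) \<le> (\<integral>r. g r \<partial>lborel)"
    unfolding ennreal_le_iff[OF Bochner_Integration.integral_nonneg[OF g_nonneg]] .
  also have "\<dots> \<le> (\<integral>r. (\<Sum>i<n. indicator (win_set n S v s i \<pi>) r * v i s) \<partial>lborel)"
  proof (rule integral_mono[OF int_g])
    show "integrable lborel (\<lambda>r. \<Sum>i<n. indicator (win_set n S v s i \<pi>) r * v i s)"
      using integral_sum_indicator(1)[of "{..<n}" "\<lambda>i. win_set n S v s i \<pi>" "\<lambda>i. v i s"]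
        win_set_measurable[OF v s] by auto
    fix r
    show "g r \<le> (\<Sum>i<n. indicator (win_set n S v s i \<pi>) r * v i s)"
    proof (cases "r \<in> {0..<1}")
      case True
      then show ?thesis using fr_max_le_sum_win_set[OF n v s \<pi>] unfolding g_def V_def by simp
    next
      case False
      have "0 \<le> (\<Sum>i<n. indicator (win_set n S v s i \<pi>) r * v i s)"
        using valid_vals_pos[OF v s] by (intro sum_nonneg) (auto simp: less_imp_le)
      then show ?thesis using False unfolding g_def by simp
    qed
  qed
  also have "\<dots> = (\<Sum>i<n. measure lborel (win_set n S v s i \<pi>) * v i s)"
    using integral_sum_indicator(2)[of "{..<n}" "\<lambda>i. win_set n S v s i \<pi>" "\<lambda>i. v i s"]
      win_set_measurable[OF v s] by auto
  finally show ?thesis unfolding V_def .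
qed

lemma welfare_ge:
  assumes n: "2 \<le> n" and v: "valid_vals n S v" and s: "s \<in> sprof n S"
  defines "D \<equiv> \<lambda>j. sb_degree n S (v j)"
  shows "Max {v i s | i. i < n} / (8 * (real (Max {D j | j. j < n}) + 1) * ln 2)
    \<le> (\<Sum>i<n. alloc n S v D s i * v i s)"
proof -
  define V where "V = Max {v i s | i. i < n}"
  define E where "E = 4 * (real (Max {D j | j. j < n}) + 1)"
  define F where "F = (fact n :: real)"
  have E: "0 < E" unfolding E_def by (simp add: add_pos_nonneg)
  have F: "0 < F" "real (card (Perms n)) = F" unfolding F_def using card_permutations[of "{..<n}" n] by simp_all
  have "V / (8 * (real (Max {D j | j. j < n}) + 1) * ln 2) = V / (2 * ln 2) / E"
    unfolding E_def by (simp add: algebra_simps)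
  also have "\<dots> = F * (V / (2 * ln 2)) / (F * E)"
    using F(1) by simp
  also have "\<dots> \<le> (\<Sum>\<pi>\<in>Perms n. \<Sum>i<n. measure lborel (win_set n S v s i \<pi>) * v i s) / (F * E)"
  proof -
    have "V / (2 * ln 2) \<le> (\<Sum>i<n. measure lborel (win_set n S v s i \<pi>) * v i s)" if "\<pi> \<in> Perms n" for \<pi>
      using welfare_given_perm_ge[OF _ v s] n that unfolding V_def by simp
    then have "(\<Sum>\<pi>\<in>Perms n. V / (2 * ln 2))
        \<le> (\<Sum>\<pi>\<in>Perms n. \<Sum>i<n. measure lborel (win_set n S v s i \<pi>) * v i s)"
      by (rule sum_mono)
    then show ?thesis using F E by (intro divide_right_mono) auto
  qed
  also have "\<dots> = (\<Sum>i<n. (\<Sum>\<pi>\<in>Perms n. measure lborel (win_set n S v s i \<pi>)) * v i s / (F * E))"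
    by (simp add: sum_divide_distrib sum_distrib_right sum.swap[of _ "{..<n}"])
  also have "\<dots> \<le> (\<Sum>i<n. alloc n S v D s i * v i s)"
  proof (rule sum_mono)
    fix i assume i: "i \<in> {..<n}"
    have "eta n D i \<le> E" unfolding E_def using eta_le[of i n D] i n by simp
    then have "(\<Sum>\<pi>\<in>Perms n. measure lborel (win_set n S v s i \<pi>)) * v i s / (F * E)
        \<le> (\<Sum>\<pi>\<in>Perms n. measure lborel (win_set n S v s i \<pi>)) * v i s / (F * eta n D i)"
      using F eta_pos[of n D i] valid_vals_pos[OF v s, of i] i
      by (intro divide_left_mono mult_nonneg_nonneg sum_nonneg mult_left_mono mult_pos_pos) auto
    then show "(\<Sum>\<pi>\<in>Perms n. measure lborel (win_set n S v s i \<pi>)) * v i s / (F * E)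
        \<le> alloc n S v D s i * v i s"
      unfolding alloc_eq_sum_win_set F_def by simp
  qed
  finally show ?thesis unfolding V_def .
qed

theorem mainTheorem14:
  fixes n :: nat and S :: "nat \<Rightarrow> real set"
  assumes n2: "n \<ge> 2"
  shows
    \<comment> \<open>(i-a) x_i depends on bidder i's report only through v_i(s)\<close>
    "(\<forall>i<n. \<forall>v v' d d' s s'.
        valid_vals n S v \<and> valid_vals n S v' \<and> s \<in> sprof n S \<and> s' \<in> sprof n S \<and>
        (\<forall>j<n. j \<noteq> i \<longrightarrow> s j = s' j \<and> v j = v' j \<and> d j = d' j) \<and> v i s = v' i s'
        \<longrightarrow> alloc n S v d s i = alloc n S v' d' s' i)
   \<and> \<comment> \<open>(i-b) non-decreasing in the bid\<close>
     (\<forall>i<n. \<forall>v d. \<forall>s\<in>sprof n S. valid_vals n S v \<longrightarrow> mono_on {0..} (xbid n S v d s i))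
   \<and> \<comment> \<open>(i-c) EPIC-IR\<close>
     (\<forall>v. valid_vals n S v \<longrightarrow>
       (let D = (\<lambda>j. sb_degree n S (v j)) in
        \<forall>i<n. \<forall>s\<in>sprof n S.
          0 \<le> alloc n S v D s i * v i s - pay n S v D s i \<and>
          (\<forall>si'\<in>S i. \<forall>vi' di'. (\<forall>u\<in>sprof n S. 0 < vi' u) \<longrightarrow>
             alloc n S (v(i := vi')) (D(i := di')) (s(i := si')) i * v i s
               - pay n S (v(i := vi')) (D(i := di')) (s(i := si')) i
             \<le> alloc n S v D s i * v i s - pay n S v D s i)))
   \<and> \<comment> \<open>(ii) feasibility\<close>
     (\<forall>v. valid_vals n S v \<longrightarrow> (\<forall>s\<in>sprof n S.
        (\<Sum>i<n. alloc n S v (\<lambda>j. sb_degree n S (v j)) s i) \<le> 1))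
   \<and> \<comment> \<open>(iii) approximation\<close>
     (\<forall>v. valid_vals n S v \<longrightarrow> (\<forall>s\<in>sprof n S.
        (let D = (\<lambda>j. sb_degree n S (v j)) in
         Max {v i s | i. i < n} / (8 * (real (Max {D j | j. j < n}) + 1) * ln 2)
           \<le> (\<Sum>i<n. alloc n S v D s i * v i s))))"
  unfolding Let_def
  using alloc_depends_on_own_value_only xbid_mono epic_ir alloc_sum_le_1[OF n2] welfare_ge[OF n2]
  by (intro conjI allI impI ballI) blast+

end
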